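(* Let $\mathbb{F}$ be a field with a non-identity involution $x\mapsto x^\star$, $\mathbb{K}=\{x\in\mathbb{F}:x^\star=x\}$, $V$ an $n$-dimensional $\mathbb{F}$-vector space, and $b$ a non-degenerate Hermitian form on $V$ with Witt index $\nu$. Let $\mathcal{F}$ be a maximal partially complete $b$-singular flag of $V$. Then $\mathrm{WH}_{b,\mathcal{F}}$ is a $\mathbb{K}$-linear subspace of $\mathrm{End}_{\mathbb{F}}(V)$ with $\dim_{\mathbb{K}}\mathrm{WH}_{b,\mathcal{F}}=\nu(2n-2\nu-1)$.
   Context: A sesquilinear form $b$ on $V$ is linear in the second argument and satisfies $b(\alpha x+x',y)=\alpha^\star b(x,y)+b(x',y)$; it is Hermitian if $b(y,x)=b(x,y)^\star$; non-degenerate if $b(x,y)=0$ for all $x$ forces $y=0$. An $\mathbb{F}$-subspace $X$ is totally $b$-singular if $b(x,y)=0$ for all $x,y\in X$; the Witt index is the maximal $\mathbb{F}$-dimension of such a subspace. An $\mathbb{F}$-linear endomorphism $u$ is $b$-Hermitian if $b(u(x),y)=b(x,u(y))$ for all $x,y$; $\mathcal{H}_b$ is the set of these. A flag $(F_0,\dots,F_p)$ of $\mathbb{F}$-subspaces is partially complete if $\dim_{\mathbb{F}}F_i=i$, $b$-singular if $F_p$ is totally $b$-singular, maximal if $p=\nu$. $\mathrm{WH}_{b,\mathcal{F}}$ is the set of nilpotent $u\in\mathcal{H}_b$ with $u(F_i)\subseteq F_i$ for all $i$. *)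

theory Defs
  imports Complex_Main "HOL-Library.Function_Algebras"
begin

definition nontrivial_involution :: "('f::field \<Rightarrow> 'f) \<Rightarrow> bool" where
  "nontrivial_involution st \<longleftrightarrow>
     (\<forall>x y. st (x + y) = st x + st y) \<and> (\<forall>x y. st (x * y) = st x * st y) \<and>
     (\<forall>x. st (st x) = x) \<and> st \<noteq> id"

definition fixed_field :: "('f \<Rightarrow> 'f) \<Rightarrow> 'f set" where
  "fixed_field st = {x. st x = x}"

definition sesquilinear ::
  "('f::field \<Rightarrow> 'f) \<Rightarrow> ('f \<Rightarrow> 'v::ab_group_add \<Rightarrow> 'v) \<Rightarrow> ('v \<Rightarrow> 'v \<Rightarrow> 'f) \<Rightarrow> bool" where
  "sesquilinear st scale b \<longleftrightarrow>
     (\<forall>a x y y'. b x (scale a y + y') = a * b x y + b x y') \<and>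
     (\<forall>a x x' y. b (scale a x + x') y = st a * b x y + b x' y)"

definition hermitian_form ::
  "('f::field \<Rightarrow> 'f) \<Rightarrow> ('f \<Rightarrow> 'v::ab_group_add \<Rightarrow> 'v) \<Rightarrow> ('v \<Rightarrow> 'v \<Rightarrow> 'f) \<Rightarrow> bool" where
  "hermitian_form st scale b \<longleftrightarrow> sesquilinear st scale b \<and> (\<forall>x y. b y x = st (b x y))"

definition non_degenerate :: "('v::zero \<Rightarrow> 'v \<Rightarrow> 'f::zero) \<Rightarrow> bool" where
  "non_degenerate b \<longleftrightarrow> (\<forall>y. (\<forall>x. b x y = 0) \<longrightarrow> y = 0)"

definition totally_singular ::
  "('f::field \<Rightarrow> 'v::ab_group_add \<Rightarrow> 'v) \<Rightarrow> ('v \<Rightarrow> 'v \<Rightarrow> 'f) \<Rightarrow> 'v set \<Rightarrow> bool" where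
  "totally_singular scale b X \<longleftrightarrow> module.subspace scale X \<and> (\<forall>x\<in>X. \<forall>y\<in>X. b x y = 0)"

definition witt_index ::
  "('f::field \<Rightarrow> 'v::ab_group_add \<Rightarrow> 'v) \<Rightarrow> ('v \<Rightarrow> 'v \<Rightarrow> 'f) \<Rightarrow> nat" where
  "witt_index scale b = Max {vector_space.dim scale X | X. totally_singular scale b X}"

definition herm_endos ::
  "('f::field \<Rightarrow> 'v::ab_group_add \<Rightarrow> 'v) \<Rightarrow> ('v \<Rightarrow> 'v \<Rightarrow> 'f) \<Rightarrow> ('v \<Rightarrow> 'v) set" where
  "herm_endos scale b = {u. Vector_Spaces.linear scale scale u \<and> (\<forall>x y. b (u x) y = b x (u y))}"

definition nilpotent_map :: "('v::zero \<Rightarrow> 'v) \<Rightarrow> bool" where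
  "nilpotent_map u \<longleftrightarrow> (\<exists>k. (u ^^ k) = (\<lambda>_. 0))"

definition partially_complete_flag ::
  "('f::field \<Rightarrow> 'v::ab_group_add \<Rightarrow> 'v) \<Rightarrow> (nat \<Rightarrow> 'v set) \<Rightarrow> nat \<Rightarrow> bool" where
  "partially_complete_flag scale Fl p \<longleftrightarrow>
     (\<forall>i\<le>p. module.subspace scale (Fl i) \<and> vector_space.dim scale (Fl i) = i) \<and>
     (\<forall>i<p. Fl i \<subseteq> Fl (Suc i))"

definition singular_flag ::
  "('f::field \<Rightarrow> 'v::ab_group_add \<Rightarrow> 'v) \<Rightarrow> ('v \<Rightarrow> 'v \<Rightarrow> 'f) \<Rightarrow> (nat \<Rightarrow> 'v set) \<Rightarrow> nat \<Rightarrow> bool" where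
  "singular_flag scale b Fl p \<longleftrightarrow> partially_complete_flag scale Fl p \<and> totally_singular scale b (Fl p)"

definition WH ::
  "('f::field \<Rightarrow> 'v::ab_group_add \<Rightarrow> 'v) \<Rightarrow> ('v \<Rightarrow> 'v \<Rightarrow> 'f) \<Rightarrow> (nat \<Rightarrow> 'v set) \<Rightarrow> nat \<Rightarrow> ('v \<Rightarrow> 'v) set" where
  "WH scale b Fl p = {u \<in> herm_endos scale b. nilpotent_map u \<and> (\<forall>i\<le>p. u ` Fl i \<subseteq> Fl i)}"

definition K_subspace :: "'f set \<Rightarrow> ('f \<Rightarrow> 'w::ab_group_add \<Rightarrow> 'w) \<Rightarrow> 'w set \<Rightarrow> bool" where
  "K_subspace K smul S \<longleftrightarrow> 0 \<in> S \<and> (\<forall>x\<in>S. \<forall>y\<in>S. x + y \<in> S) \<and> (\<forall>k\<in>K. \<forall>x\<in>S. smul k x \<in> S)"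

definition K_span :: "'f set \<Rightarrow> ('f \<Rightarrow> 'w::ab_group_add \<Rightarrow> 'w) \<Rightarrow> 'w set \<Rightarrow> 'w set" where
  "K_span K smul B = {\<Sum>v\<in>T. smul (c v) v | T c. finite T \<and> T \<subseteq> B \<and> (\<forall>v\<in>T. c v \<in> K)}"

definition K_independent :: "'f::zero set \<Rightarrow> ('f \<Rightarrow> 'w::ab_group_add \<Rightarrow> 'w) \<Rightarrow> 'w set \<Rightarrow> bool" where
  "K_independent K smul B \<longleftrightarrow>
     (\<forall>T c. finite T \<and> T \<subseteq> B \<and> (\<forall>v\<in>T. c v \<in> K) \<and> (\<Sum>v\<in>T. smul (c v) v) = 0 \<longrightarrow> (\<forall>v\<in>T. c v = 0))"

definition K_dim_eq :: "'f::zero set \<Rightarrow> ('f \<Rightarrow> 'w::ab_group_add \<Rightarrow> 'w) \<Rightarrow> 'w set \<Rightarrow> nat \<Rightarrow> bool" where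
  "K_dim_eq K smul S d \<longleftrightarrow>
     (\<exists>B. finite B \<and> card B = d \<and> B \<subseteq> S \<and> K_independent K smul B \<and> K_span K smul B = S)"

end

theory Submission
  imports Defs
begin

text \<open>Let \<open>e\<^sub>1, \<dots>, e\<^sub>\<nu>\<close> be a basis adapted to the flag, \<open>f\<^sub>1, \<dots>, f\<^sub>\<nu>\<close> isotropic hyperbolic
  partners (\<open>b (e\<^sub>i, f\<^sub>j) = \<delta>\<^sub>i\<^sub>j\<close>), \<open>E = F\<^sub>\<nu>\<close>, and \<open>A\<close> the orthogonal complement of all
  \<open>e\<^sub>i, f\<^sub>i\<close>, so that \<open>n = 2\<nu> + dim A\<close>. Nilpotency of a Hermitian \<open>u\<close> stabilising the flag
  forces \<open>u e\<^sub>k \<in> span {e\<^sub>i | i < k}\<close>, and together with maximality of the flag (every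
  isotropic vector of \<open>E\<^sup>\<bottom>\<close> lies in \<open>E\<close>) it forces \<open>u (E\<^sup>\<bottom>) \<subseteq> E\<close>. Conversely these
  conditions imply nilpotency, since they push every vector down a chain of length \<open>2\<nu> + 1\<close>.
  The maps satisfying them are exactly the \<open>K\<close>-combinations of the Hermitian maps
  \<open>x \<mapsto> b (e\<^sub>p, x) e\<^sub>p\<close> and \<open>x \<mapsto> c b (q, x) p + c\<^sup>\<star> b (p, x) q\<close> for the pairs \<open>(e\<^sub>p, e\<^sub>q)\<close>
  with \<open>p < q\<close>, \<open>(e\<^sub>q, f\<^sub>p)\<close> with \<open>q < p\<close> and \<open>(e\<^sub>p, a)\<close> with \<open>a\<close> in a basis of \<open>A\<close>, where
  \<open>c \<in> {1, \<theta>}\<close> is a \<open>K\<close>-basis of the field; the coefficients are read off from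
  \<open>b (f\<^sub>i, u f\<^sub>j)\<close>, \<open>b (f\<^sub>j, u e\<^sub>i)\<close> and the \<open>A\<close>-component of \<open>u f\<^sub>k\<close>. This gives
  \<open>\<nu> + 2\<nu>(\<nu> - 1) + 2\<nu>(n - 2\<nu>) = \<nu>(2n - 2\<nu> - 1)\<close> basis elements.\<close>

lemma sum_apply: "(\<Sum>i\<in>S. g i) x = (\<Sum>i\<in>S. g i x)"
  by (induction S rule: infinite_finite_induct) auto

lemma sum_eq_single:
  assumes "finite A" "a \<in> A" "\<And>s. s \<in> A \<Longrightarrow> s \<noteq> a \<Longrightarrow> g s = 0"
  shows "sum g A = g a"
proof -
  have "sum g A = sum g {a}"
    by (rule sum.mono_neutral_right) (use assms in auto)
  then show ?thesis
    by simp
qed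

lemma sum_eq_pair:
  assumes "finite A" "a \<in> A" "c \<in> A" "a \<noteq> c" "\<And>s. s \<in> A \<Longrightarrow> s \<noteq> a \<Longrightarrow> s \<noteq> c \<Longrightarrow> g s = 0"
  shows "sum g A = g a + g c"
proof -
  have "sum g A = sum g {a, c}"
    by (rule sum.mono_neutral_right) (use assms in auto)
  then show ?thesis
    using assms(4) by simp
qed
locale unique_coordinates =
  fixes smul :: "'f::zero_neq_one \<Rightarrow> 'w::ab_group_add \<Rightarrow> 'w" and K :: "'f set"
    and I :: "'i set" and \<psi> :: "'i \<Rightarrow> 'w"
  assumes smul_0: "smul 0 v = 0" and smul_1: "smul 1 v = v"
    and zero_in_K: "0 \<in> K" and one_in_K: "1 \<in> K" and finite_I: "finite I"
    and unique: "\<forall>s\<in>I. x s \<in> K \<Longrightarrow> \<forall>s\<in>I. x' s \<in> K \<Longrightarrow>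
      (\<Sum>s\<in>I. smul (x s) (\<psi> s)) = (\<Sum>s\<in>I. smul (x' s) (\<psi> s)) \<Longrightarrow> \<forall>s\<in>I. x s = x' s"
begin

definition combinations :: "'w set" where
  "combinations = {(\<Sum>s\<in>I. smul (x s) (\<psi> s)) | x. \<forall>s\<in>I. x s \<in> K}"

lemma inj_on_\<psi>: "inj_on \<psi> I"
proof (rule inj_onI)
  define \<delta> :: "'i \<Rightarrow> 'i \<Rightarrow> 'f" where "\<delta> s t = (if t = s then 1 else 0)" for s t
  have \<delta>K: "\<forall>t\<in>I. \<delta> s t \<in> K" for s
    unfolding \<delta>_def using zero_in_K one_in_K by auto
  have \<delta>_sum: "(\<Sum>t\<in>I. smul (\<delta> s t) (\<psi> t)) = \<psi> s" if "s \<in> I" for s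
  proof -
    have "(\<Sum>t\<in>I. smul (\<delta> s t) (\<psi> t)) = (\<Sum>t\<in>I. if t = s then \<psi> t else 0)"
      unfolding \<delta>_def by (intro sum.cong) (auto simp: smul_0 smul_1)
    then show ?thesis
      using that finite_I by simp
  qed
  fix s s' assume s: "s \<in> I" "s' \<in> I" "\<psi> s = \<psi> s'"
  then have "(\<Sum>t\<in>I. smul (\<delta> s t) (\<psi> t)) = (\<Sum>t\<in>I. smul (\<delta> s' t) (\<psi> t))"
    using \<delta>_sum by simp
  then have "\<forall>t\<in>I. \<delta> s t = \<delta> s' t"
    by (rule unique[OF \<delta>K \<delta>K])
  then show "s = s'"
    using s(1) by (auto simp: \<delta>_def split: if_splits)
qed

lemma sum_image_eq_combination:
  assumes "T \<subseteq> \<psi> ` I"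
  shows "(\<Sum>v\<in>T. smul (c v) v) = (\<Sum>s\<in>I. smul (if \<psi> s \<in> T then c (\<psi> s) else 0) (\<psi> s))"
proof -
  have "(\<Sum>s\<in>I. smul (if \<psi> s \<in> T then c (\<psi> s) else 0) (\<psi> s))
      = (\<Sum>v\<in>\<psi> ` I. smul (if v \<in> T then c v else 0) v)"
    using inj_on_\<psi> by (simp add: sum.reindex)
  also have "\<dots> = (\<Sum>v\<in>T. smul (c v) v)"
    using assms finite_I by (intro sum.mono_neutral_cong_right) (auto simp: smul_0)
  finally show ?thesis
    by (rule sym)
qed

lemma K_independent_image: "K_independent K smul (\<psi> ` I)"
  unfolding K_independent_def
proof (intro allI impI ballI)
  fix T c v
  assume T: "finite T \<and> T \<subseteq> \<psi> ` I \<and> (\<forall>v\<in>T. c v \<in> K) \<and> (\<Sum>v\<in>T. smul (c v) v) = 0"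
    and v: "v \<in> T"
  let ?x = "\<lambda>s. if \<psi> s \<in> T then c (\<psi> s) else 0"
  have "(\<Sum>s\<in>I. smul (?x s) (\<psi> s)) = (\<Sum>s\<in>I. smul 0 (\<psi> s))"
    using T sum_image_eq_combination[of T c] by (simp add: smul_0)
  moreover have "\<forall>s\<in>I. ?x s \<in> K"
    using T zero_in_K by auto
  ultimately have "\<forall>s\<in>I. ?x s = 0"
    using unique[of ?x "\<lambda>_. 0"] zero_in_K by blast
  moreover obtain s where "s \<in> I" "v = \<psi> s"
    using T v by blast
  ultimately show "c v = 0"
    using v by auto
qed

lemma K_span_image: "K_span K smul (\<psi> ` I) = combinations"
proof
  show "K_span K smul (\<psi> ` I) \<subseteq> combinations"
  proof
    fix w assume "w \<in> K_span K smul (\<psi> ` I)"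
    then obtain T c where w: "w = (\<Sum>v\<in>T. smul (c v) v)" and T: "T \<subseteq> \<psi> ` I" "\<forall>v\<in>T. c v \<in> K"
      unfolding K_span_def by blast
    let ?x = "\<lambda>s. if \<psi> s \<in> T then c (\<psi> s) else 0"
    have "\<forall>s\<in>I. ?x s \<in> K"
      using T(2) zero_in_K by auto
    then show "w \<in> combinations"
      unfolding combinations_def w sum_image_eq_combination[OF T(1)]
      by (intro CollectI exI[of _ ?x]) simp
  qed
  show "combinations \<subseteq> K_span K smul (\<psi> ` I)"
  proof
    fix w assume "w \<in> combinations"
    then obtain x where w: "w = (\<Sum>s\<in>I. smul (x s) (\<psi> s))" and xK: "\<forall>s\<in>I. x s \<in> K"
      unfolding combinations_def by auto
    define c where "c v = x (inv_into I \<psi> v)" for v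
    have "w = (\<Sum>v\<in>\<psi> ` I. smul (c v) v)"
      unfolding w c_def using inj_on_\<psi> by (simp add: sum.reindex)
    moreover have "\<forall>v\<in>\<psi> ` I. c v \<in> K"
      unfolding c_def using xK by (auto simp: inv_into_into)
    ultimately show "w \<in> K_span K smul (\<psi> ` I)"
      unfolding K_span_def using finite_I by blast
  qed
qed

lemma K_dim_eq_combinations: "K_dim_eq K smul combinations (card I)"
proof -
  have "\<psi> ` I \<subseteq> K_span K smul (\<psi> ` I)"
  proof
    fix v assume "v \<in> \<psi> ` I"
    then show "v \<in> K_span K smul (\<psi> ` I)"
      unfolding K_span_def using one_in_K smul_1
      by (intro CollectI exI[of _ "{v}"] exI[of _ "\<lambda>_. 1"]) simp
  qed
  then show ?thesis
    unfolding K_dim_eq_def K_span_image[symmetric] using finite_I inj_on_\<psi> K_independent_image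
    by (intro exI[of _ "\<psi> ` I"]) (simp add: card_image)
qed

end

context finite_dimensional_vector_space
begin

lemma span_insert_eq_subspace:
  assumes T: "subspace T" "dim T = Suc (card S)" and S: "independent S" "S \<subseteq> T"
    and x: "x \<in> T" "x \<notin> span S"
  shows "span (insert x S) = T \<and> independent (insert x S) \<and> card (insert x S) = Suc (card S)"
proof -
  have indep: "independent (insert x S)"
    using x(2) S(1) by (rule independent_insertI)
  have "x \<notin> S"
    using x(2) span_base by metis
  then have card: "card (insert x S) = Suc (card S)"
    using finiteI_independent[OF S(1)] by simp
  have "insert x S \<subseteq> T"
    using S(2) x(1) by blast
  then have "span (insert x S) \<subseteq> T"
    using T(1) by (rule span_minimal)
  moreover have "dim T \<le> dim (span (insert x S))"
    using T(2) dim_span_eq_card_independent[OF indep] card by simp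
  ultimately have "span (insert x S) = T"
    by (rule subspace_dim_equal[OF subspace_span T(1)])
  with indep card show ?thesis
    by blast
qed

lemma partially_complete_flag_basis:
  assumes "partially_complete_flag scale Fl p"
  obtains e where "\<And>i. i \<le> p \<Longrightarrow> Fl i = span (e ` {..<i})"
    and "independent (e ` {..<p})" and "inj_on e {..<p}"
proof -
  have sub: "subspace (Fl i)" and dim: "dim (Fl i) = i" if "i \<le> p" for i
    using assms that unfolding partially_complete_flag_def by auto
  have mono: "Fl i \<subseteq> Fl (Suc i)" if "i < p" for i
    using assms that unfolding partially_complete_flag_def by auto
  have new_vector: "\<exists>x. x \<in> Fl (Suc i) \<and> x \<notin> Fl i" if "i < p" for i
  proof (rule ccontr)
    assume "\<not> ?thesis"
    then have "dim (Fl (Suc i)) \<le> dim (Fl i)"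
      by (intro dim_subset) blast
    then show False
      using dim[of i] dim[of "Suc i"] that by simp
  qed
  define e where "e i = (SOME x. x \<in> Fl (Suc i) \<and> x \<notin> Fl i)" for i
  have e: "e i \<in> Fl (Suc i) \<and> e i \<notin> Fl i" if "i < p" for i
    unfolding e_def by (rule someI_ex[OF new_vector[OF that]])
  have flag: "Fl i = span (e ` {..<i}) \<and> independent (e ` {..<i}) \<and> card (e ` {..<i}) = i"
    if "i \<le> p" for i
    using that
  proof (induction i)
    case 0
    have "Fl 0 \<subseteq> {0}"
      using dim[of 0] by simp
    moreover have "0 \<in> Fl 0"
      using sub[of 0] by (simp add: subspace_0)
    ultimately have "Fl 0 = {0}"
      by blast
    then show ?case
      by (simp add: independent_empty)
  next
    case (Suc i)
    then have i: "i < p"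
      by simp
    have IH: "Fl i = span (e ` {..<i})" "independent (e ` {..<i})" "card (e ` {..<i}) = i"
      using Suc by auto
    have "e ` {..<i} \<subseteq> Fl (Suc i)"
      using span_superset[of "e ` {..<i}"] IH(1) mono[OF i] by simp
    then show ?case
      using span_insert_eq_subspace[OF sub[OF Suc.prems], of "e ` {..<i}" "e i"] dim[OF Suc.prems]
        e[OF i] IH by (simp add: lessThan_Suc)
  qed
  show ?thesis
  proof (rule that)
    show "Fl i = span (e ` {..<i})" if "i \<le> p" for i
      using flag[OF that] by blast
    show "independent (e ` {..<p})"
      using flag[of p] by blast
    show "inj_on e {..<p}"
      using flag[of p] by (intro eq_card_imp_inj_on) auto
  qed
qed

end

section \<open>Fields with an involution\<close>

locale involutive_field =
  fixes st :: "'f::field \<Rightarrow> 'f" and \<theta> :: 'f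
  assumes st_add [simp]: "st (x + y) = st x + st y"
    and st_mult [simp]: "st (x * y) = st x * st y"
    and st_st [simp]: "st (st x) = x"
    and st_\<theta>: "st \<theta> \<noteq> \<theta>"
begin

lemma st_0 [simp]: "st 0 = 0"
  using st_add[of 0 0] by (metis add_cancel_right_right)

lemma st_uminus [simp]: "st (- x) = - st x"
  using st_add[of x "- x"] minus_unique[of "st x" "st (- x)"] by simp

lemma st_diff [simp]: "st (x - y) = st x - st y"
  using st_add[of x "- y"] by simp

lemma st_eq_iff [simp]: "st x = st y \<longleftrightarrow> x = y"
  by (metis st_st)

lemma st_eq_0_iff [simp]: "st x = 0 \<longleftrightarrow> x = 0"
  using st_eq_iff[of x 0] by simp

lemma st_1 [simp]: "st 1 = 1"
proof -
  have "st 1 * st 1 = st 1 * 1"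
    using st_mult[of 1 1] by simp
  then show ?thesis
    by (simp del: st_mult)
qed

lemma st_inverse [simp]: "st (inverse x) = inverse (st x)"
proof (cases "x = 0")
  case False
  then have "st x * st (inverse x) = 1"
    using st_mult[of x "inverse x"] by simp
  then show ?thesis
    using inverse_unique by metis
qed simp

lemma st_divide [simp]: "st (x / y) = st x / st y"
  by (simp add: divide_inverse)

text \<open>Coordinates of a scalar in the \<open>K\<close>-basis \<open>1, \<theta>\<close> of the field, \<open>K\<close> the fixed field.\<close>
definition im_coord :: "'f \<Rightarrow> 'f" where
  "im_coord z = (z - st z) / (\<theta> - st \<theta>)"

definition re_coord :: "'f \<Rightarrow> 'f" where
  "re_coord z = z - im_coord z * \<theta>"

lemma st_im_coord [simp]: "st (im_coord z) = im_coord z"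
proof -
  have "st (im_coord z) = (- (z - st z)) / (- (\<theta> - st \<theta>))"
    unfolding im_coord_def by simp
  then show ?thesis
    unfolding im_coord_def by (simp only: minus_divide_divide)
qed

lemma re_im_coord: "re_coord z + im_coord z * \<theta> = z"
  by (simp add: re_coord_def)

lemma st_re_coord [simp]: "st (re_coord z) = re_coord z"
proof -
  have "im_coord z * (\<theta> - st \<theta>) = z - st z"
    unfolding im_coord_def using st_\<theta> by simp
  then show ?thesis
    unfolding re_coord_def by (simp add: algebra_simps)
qed

lemma fixed_coords_unique:
  assumes "st x0 = x0" "st x1 = x1" "st y0 = y0" "st y1 = y1"
    and eq: "x0 + x1 * \<theta> = y0 + y1 * \<theta>"
  shows "x0 = y0 \<and> x1 = y1"
proof -
  have "x0 + x1 * st \<theta> = y0 + y1 * st \<theta>"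
    using arg_cong[OF eq, of st] assms(1-4) by simp
  then have "x0 - y0 = (y1 - x1) * st \<theta>" and "x0 - y0 = (y1 - x1) * \<theta>"
    using eq by (simp_all add: algebra_simps)
  then have "(y1 - x1) * (\<theta> - st \<theta>) = 0"
    by (simp add: right_diff_distrib)
  then have "x1 = y1"
    using st_\<theta> by simp
  with eq show ?thesis
    by simp
qed

lemma fixed_coords_unique_bool:
  assumes "\<And>r. st (x r) = x r" "\<And>r. st (y r) = y r"
    and "x False + x True * \<theta> = y False + y True * \<theta>"
  shows "x r = y r"
  using fixed_coords_unique[of "x False" "x True" "y False" "y True"] assms by (cases r) simp_all

lemma exists_trace_nonzero: "\<exists>t. t + st t \<noteq> 0"
proof (rule ccontr)
  assume "\<not> ?thesis"
  then have "\<theta> + st \<theta> = 0" and "1 + st 1 = (0::'f)"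
    by blast+
  then have "st \<theta> = - \<theta>" and "- \<theta> = \<theta>"
    by (simp_all add: eq_neg_iff_add_eq_0 add.commute)
  then show False
    using st_\<theta> by simp
qed

lemma fixed_is_trace:
  assumes "st a = a"
  shows "\<exists>c. c + st c = a"
proof -
  obtain t where t: "t + st t \<noteq> 0"
    using exists_trace_nonzero by blast
  have "a * t / (t + st t) + st (a * t / (t + st t)) = a * (t + st t) / (t + st t)"
    using assms by (simp add: add_divide_distrib distrib_left add.commute)
  also have "\<dots> = a"
    using t by simp
  finally show ?thesis ..
qed

definition fixed_basis :: "bool \<Rightarrow> 'f" where
  "fixed_basis r = (if r then \<theta> else 1)"

definition fixed_coord :: "bool \<Rightarrow> 'f \<Rightarrow> 'f" where
  "fixed_coord r z = (if r then im_coord z else re_coord z)"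

lemma st_fixed_coord [simp]: "st (fixed_coord r z) = fixed_coord r z"
  by (simp add: fixed_coord_def)

lemma fixed_coord_sum: "fixed_coord False z + fixed_coord True z * \<theta> = z"
  by (simp add: fixed_coord_def re_im_coord)

end

section \<open>Hermitian forms\<close>

locale hermitian_space =
  finite_dimensional_vector_space scale Bas + involutive_field st \<theta>
  for scale :: "'f::field \<Rightarrow> 'v::ab_group_add \<Rightarrow> 'v" and Bas :: "'v set"
    and st :: "'f \<Rightarrow> 'f" and \<theta> :: 'f +
  fixes b :: "'v \<Rightarrow> 'v \<Rightarrow> 'f"
  assumes hermitian: "hermitian_form st scale b"
    and nondeg: "non_degenerate b"
begin

sublocale endo: vector_space_pair scale scale ..

lemma b_sym: "b y x = st (b x y)"
  using hermitian unfolding hermitian_form_def by blast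

lemma st_b [simp]: "st (b x y) = b y x"
  using b_sym[of y x] by simp

lemma b_sesquilinear:
  "b x (scale a y + y') = a * b x y + b x y'" "b (scale a x + x') y = st a * b x y + b x' y"
  using hermitian unfolding hermitian_form_def sesquilinear_def by blast+

lemma b_add_right [simp]: "b x (y + z) = b x y + b x z"
  using b_sesquilinear(1)[of x 1 y z] by simp

lemma b_add_left [simp]: "b (x + y) z = b x z + b y z"
  using b_sesquilinear(2)[of 1 x y z] by simp

lemma b_zero_right [simp]: "b x 0 = 0"
  using b_add_right[of x 0 0] by (metis add_cancel_right_right)

lemma b_zero_left [simp]: "b 0 x = 0"
  using b_add_left[of 0 0 x] by (metis add_cancel_right_right)

lemma b_scale_right [simp]: "b x (scale a y) = a * b x y"
  using b_sesquilinear(1)[of x a y 0] by simp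

lemma b_scale_left [simp]: "b (scale a x) z = st a * b x z"
  using b_sesquilinear(2)[of a x 0 z] by simp

lemma b_minus_right [simp]: "b x (- y) = - b x y"
  using b_scale_right[of x "-1" y] by simp

lemma b_minus_left [simp]: "b (- x) y = - b x y"
  using b_scale_left[of "-1" x y] by simp

lemma b_diff_right [simp]: "b x (y - z) = b x y - b x z"
  using b_add_right[of x y "- z"] by simp

lemma b_diff_left [simp]: "b (x - y) z = b x z - b y z"
  using b_add_left[of x "- y" z] by simp

lemma b_sum_right: "b x (\<Sum>i\<in>S. g i) = (\<Sum>i\<in>S. b x (g i))"
  by (induction S rule: infinite_finite_induct) auto

lemma b_sum_left: "b (\<Sum>i\<in>S. g i) y = (\<Sum>i\<in>S. b (g i) y)"
  by (induction S rule: infinite_finite_induct) auto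

lemma nondeg_right: "(\<And>x. b x y = 0) \<Longrightarrow> y = 0"
  using nondeg unfolding non_degenerate_def by blast

lemma nondeg_left: "(\<And>y. b x y = 0) \<Longrightarrow> x = 0"
  using nondeg_right[of x] by (metis st_b st_0)

lemma orthogonal_spans:
  assumes "\<And>x y. x \<in> S \<Longrightarrow> y \<in> T \<Longrightarrow> b x y = 0" and "x \<in> span S" and "y \<in> span T"
  shows "b x y = 0"
proof -
  have "\<forall>y\<in>T. b x y = 0"
    by (rule span_induct[OF \<open>x \<in> span S\<close>]) (use assms(1) in \<open>auto simp: subspace_def\<close>)
  then show ?thesis
    by (intro span_induct[OF \<open>y \<in> span T\<close>, of "\<lambda>y. b x y = 0"]) (auto simp: subspace_def)
qed

lemma hermitian_funpow:
  assumes "\<And>x y. b (u x) y = b x (u y)"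
  shows "b ((u ^^ m) x) y = b x ((u ^^ m) y)"
proof (induction m arbitrary: y)
  case (Suc m)
  have "b ((u ^^ Suc m) x) y = b ((u ^^ m) x) (u y)"
    using assms by simp
  also have "\<dots> = b x ((u ^^ Suc m) y)"
    using Suc by (simp add: funpow_swap1)
  finally show ?case .
qed simp

lemma basis_coeffs_unique:
  assumes "(\<Sum>v\<in>Bas. scale (g v) v) = (\<Sum>v\<in>Bas. scale (h v) v)" and "v \<in> Bas"
  shows "g v = h v"
proof -
  have "(\<Sum>v\<in>Bas. scale (g v - h v) v) = 0"
    using assms(1) by (simp add: scale_left_diff_distrib sum_subtractf)
  then show ?thesis
    using independent_Basis assms(2) unfolding independent_explicit by auto
qed

lemma b_eq_functional_if_eq_on_basis:
  assumes lam: "Vector_Spaces.linear scale (*) lam" and eq: "\<And>v. v \<in> Bas \<Longrightarrow> b z v = lam v"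
  shows "b z x = lam x"
proof -
  have lam_add: "lam (x + y) = lam x + lam y" and lam_scale: "lam (scale c x) = c * lam x" for x y c
    using lam unfolding Vector_Spaces.linear_iff by auto
  have "subspace {x. b z x = lam x}"
    unfolding subspace_def using lam_scale[of 0 0] by (simp add: lam_add lam_scale)
  then have "span Bas \<subseteq> {x. b z x = lam x}"
    using eq by (intro span_minimal) auto
  then show ?thesis
    using span_Basis by auto
qed

lemma riesz_representation:
  assumes lam: "Vector_Spaces.linear scale (*) lam"
  obtains z where "\<And>x. b z x = lam x"
proof -
  define \<Psi> where "\<Psi> z = (\<Sum>v\<in>Bas. scale (st (b z v)) v)" for z
  have lin: "Vector_Spaces.linear scale scale \<Psi>"
    unfolding Vector_Spaces.linear_iff \<Psi>_def using vector_space_axioms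
    by (simp add: sum.distrib scale_left_distrib scale_sum_right)
  have "z = 0" if "\<Psi> z = 0" for z
  proof -
    have "(\<Sum>v\<in>Bas. scale (st (b z v)) v) = (\<Sum>v\<in>Bas. scale 0 v)"
      using that unfolding \<Psi>_def by simp
    then have "st (b z v) = 0" if "v \<in> Bas" for v
      using basis_coeffs_unique[of "\<lambda>v. st (b z v)" "\<lambda>_. 0", OF _ that] by (simp del: st_b)
    then have "b z v = 0" if "v \<in> Bas" for v
      using that by (metis st_st st_0)
    then have "b z x = 0" for x
      using orthogonal_spans[of "{z}" Bas z x] span_Basis by (auto intro: span_base)
    then show ?thesis
      by (rule nondeg_left)
  qed
  then have "inj \<Psi>"
    using endo.linear_inj_iff_eq_0[OF lin] by blast
  then obtain z where z: "\<Psi> z = (\<Sum>v\<in>Bas. scale (st (lam v)) v)"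
    using linear_inj_imp_surj[OF lin] by (metis surjD)
  have "b z v = lam v" if "v \<in> Bas" for v
    using basis_coeffs_unique[OF z[unfolded \<Psi>_def] that] by (simp del: st_b)
  then show ?thesis
    using b_eq_functional_if_eq_on_basis[OF lam] that by blast
qed

lemma exists_dual_family:
  fixes e :: "nat \<Rightarrow> 'v"
  assumes indep: "independent (e ` {..<\<nu>})" and inj: "inj_on e {..<\<nu>}"
  obtains g where "\<And>i j. i < \<nu> \<Longrightarrow> j < \<nu> \<Longrightarrow> b (e i) (g j) = (if i = j then 1 else 0)"
proof -
  obtain B where B: "e ` {..<\<nu>} \<subseteq> B" "independent B" "span B = UNIV"
    using maximal_independent_subset_extend[OF subset_UNIV indep] by (metis top.extremum_unique)
  have "\<forall>j. \<exists>z. \<forall>x. b z x = representation B x (e j)"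
  proof
    fix j
    obtain z where "\<And>x. b z x = representation B x (e j)"
      using riesz_representation[OF linear_representation[OF B(2,3), of "e j"]] by blast
    then show "\<exists>z. \<forall>x. b z x = representation B x (e j)"
      by blast
  qed
  then obtain g where g: "\<forall>j x. b (g j) x = representation B x (e j)"
    by (rule choice_iff[THEN iffD1, THEN exE])
  have "b (g j) (e i) = (if i = j then 1 else 0)" if "i < \<nu>" "j < \<nu>" for i j
  proof -
    have "representation B (e i) (e j) = (if e j = e i then 1 else 0)"
      using representation_basis[OF B(2)] B(1) that by auto
    then show ?thesis
      using g inj that by (auto simp: inj_on_def)
  qed
  then show ?thesis
    using that by (metis st_b st_1 st_0)
qed

lemma b_dual_comb:
  fixes e g :: "nat \<Rightarrow> 'v"
  assumes eg: "\<And>i j. i < \<nu> \<Longrightarrow> j < \<nu> \<Longrightarrow> b (e i) (g j) = (if i = j then 1 else 0)"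
    and j: "j < \<nu>"
  shows "b (\<Sum>l<\<nu>. scale (a l) (e l)) (g j) = st (a j)"
    and "b (g j) (\<Sum>l<\<nu>. scale (a l) (e l)) = a j"
proof -
  have "b (\<Sum>l<\<nu>. scale (a l) (e l)) (g j) = (\<Sum>l<\<nu>. if j = l then st (a l) else 0)"
    unfolding b_sum_left using j by (intro sum.cong) (auto simp: eg)
  then show *: "b (\<Sum>l<\<nu>. scale (a l) (e l)) (g j) = st (a j)"
    using j by simp
  show "b (g j) (\<Sum>l<\<nu>. scale (a l) (e l)) = a j"
    using * by (metis st_b st_st)
qed

lemma b_isotropic_comb:
  fixes e :: "nat \<Rightarrow> 'v"
  assumes ee: "\<And>i j. i < \<nu> \<Longrightarrow> j < \<nu> \<Longrightarrow> b (e i) (e j) = 0" and i: "i < \<nu>"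
  shows "b (e i) (\<Sum>l<\<nu>. scale (a l) (e l)) = 0"
  unfolding b_sum_right using i ee by (intro sum.neutral) auto

lemma b_isotropic_comb_comb:
  fixes e :: "nat \<Rightarrow> 'v"
  assumes ee: "\<And>i j. i < \<nu> \<Longrightarrow> j < \<nu> \<Longrightarrow> b (e i) (e j) = 0"
  shows "b (\<Sum>l<\<nu>. scale (a l) (e l)) (\<Sum>l<\<nu>. scale (a' l) (e l)) = 0"
  unfolding b_sum_left by (intro sum.neutral) (simp add: b_isotropic_comb[where e = e, OF ee])

text \<open>Correcting the dual family by isotropic vectors makes it totally isotropic; on the
  diagonal this needs the Hermitian value \<open>b (g j) (g j)\<close> to be a trace \<open>c + st c\<close>.\<close>
lemma exists_hyperbolic_partners:
  fixes e :: "nat \<Rightarrow> 'v"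
  assumes indep: "independent (e ` {..<\<nu>})" and inj: "inj_on e {..<\<nu>}"
    and ee: "\<And>i j. i < \<nu> \<Longrightarrow> j < \<nu> \<Longrightarrow> b (e i) (e j) = 0"
  obtains f where "\<And>i j. i < \<nu> \<Longrightarrow> j < \<nu> \<Longrightarrow> b (e i) (f j) = (if i = j then 1 else 0)"
    and "\<And>i j. i < \<nu> \<Longrightarrow> j < \<nu> \<Longrightarrow> b (f i) (f j) = 0"
proof -
  obtain g where eg: "\<And>i j. i < \<nu> \<Longrightarrow> j < \<nu> \<Longrightarrow> b (e i) (g j) = (if i = j then 1 else 0)"
    using exists_dual_family[OF indep inj] by blast
  have "\<forall>j. \<exists>c. c + st c = b (g j) (g j)"
    by (intro allI fixed_is_trace) simp
  then obtain c where c: "\<And>j. c j + st (c j) = b (g j) (g j)"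
    by (rule choice_iff[THEN iffD1, THEN exE]) blast
  define s where "s l j = (if l < j then b (g l) (g j) else if l = j then c j else 0)" for l j
  define f where "f j = g j - (\<Sum>l<\<nu>. scale (s l j) (e l))" for j
  show ?thesis
  proof (rule that)
    show "b (e i) (f j) = (if i = j then 1 else 0)" if "i < \<nu>" "j < \<nu>" for i j
      unfolding f_def using that by (simp add: eg b_isotropic_comb[where e = e and i = i, OF ee])
    show "b (f i) (f j) = 0" if "i < \<nu>" "j < \<nu>" for i j
    proof -
      have "b (f i) (f j) = b (g i) (g j) - s i j - st (s j i)"
        unfolding f_def using that
        by (simp add: b_dual_comb[where e = e and g = g, OF eg]
            b_isotropic_comb_comb[where e = e, OF ee])
      also have "\<dots> = 0"
        by (cases i j rule: linorder_cases) (simp_all add: s_def c[symmetric])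
      finally show ?thesis .
    qed
  qed
qed

lemma dim_le_witt_index:
  assumes "totally_singular scale b X"
  shows "dim X \<le> witt_index scale b"
proof -
  have "{dim X | X. totally_singular scale b X} \<subseteq> {..dimension}"
    using dim_subset_UNIV by auto
  then have "finite {dim X | X. totally_singular scale b X}"
    by (rule finite_subset) simp
  then show ?thesis
    unfolding witt_index_def using assms by (intro Max_ge) auto
qed

lemma isotropic_in_span_of_maximal_singular:
  assumes S: "\<And>x z. x \<in> S \<Longrightarrow> z \<in> S \<Longrightarrow> b x z = 0" and dim_S: "dim S = witt_index scale b"
    and y: "\<And>x. x \<in> S \<Longrightarrow> b x y = 0" and "b y y = 0"
  shows "y \<in> span S"
proof (rule ccontr)
  assume "y \<notin> span S"
  then have "dim (span (insert y S)) = witt_index scale b + 1"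
    using dim_S by (simp add: dim_insert)
  moreover have "b x z = 0" if "x \<in> insert y S" "z \<in> insert y S" for x z
    using that S y \<open>b y y = 0\<close> by (metis insertE st_0 st_b)
  then have "totally_singular scale b (span (insert y S))"
    unfolding totally_singular_def using orthogonal_spans[of "insert y S" "insert y S"] by simp
  ultimately show False
    using dim_le_witt_index[of "span (insert y S)"] by simp
qed

end

section \<open>Witt frames\<close>

locale witt_frame = hermitian_space scale Bas st \<theta> b
  for scale :: "'f::field \<Rightarrow> 'v::ab_group_add \<Rightarrow> 'v" and Bas st \<theta> b +
  fixes \<nu> :: nat and e f :: "nat \<Rightarrow> 'v" and Fl :: "nat \<Rightarrow> 'v set"
  assumes b_e_e: "i < \<nu> \<Longrightarrow> j < \<nu> \<Longrightarrow> b (e i) (e j) = 0"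
    and b_e_f: "i < \<nu> \<Longrightarrow> j < \<nu> \<Longrightarrow> b (e i) (f j) = (if i = j then 1 else 0)"
    and b_f_f: "i < \<nu> \<Longrightarrow> j < \<nu> \<Longrightarrow> b (f i) (f j) = 0"
    and Fl_eq: "i \<le> \<nu> \<Longrightarrow> Fl i = span (e ` {..<i})"
    and isotropic_orthogonal_in_E:
      "(\<And>i. i < \<nu> \<Longrightarrow> b (e i) y = 0) \<Longrightarrow> b y y = 0 \<Longrightarrow> y \<in> span (e ` {..<\<nu>})"
begin

lemma b_f_e: "i < \<nu> \<Longrightarrow> j < \<nu> \<Longrightarrow> b (f i) (e j) = (if i = j then 1 else 0)"
  using b_e_f[of j i] by (metis st_b st_0 st_1)

definition E :: "'v set" where
  "E = span (e ` {..<\<nu>})"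

definition E_perp :: "'v set" where
  "E_perp = {x. \<forall>i<\<nu>. b (e i) x = 0}"

definition A :: "'v set" where
  "A = {x. \<forall>i<\<nu>. b (e i) x = 0 \<and> b (f i) x = 0}"

definition proj_A :: "'v \<Rightarrow> 'v" where
  "proj_A x = x - (\<Sum>i<\<nu>. scale (b (f i) x) (e i)) - (\<Sum>i<\<nu>. scale (b (e i) x) (f i))"

lemma b_f_comb_e:
  assumes j: "j < \<nu>"
  shows "b (f j) (\<Sum>i<\<nu>. scale (c i) (e i)) = c j"
proof -
  have "b (f j) (\<Sum>i<\<nu>. scale (c i) (e i)) = (\<Sum>i<\<nu>. if j = i then c i else 0)"
    unfolding b_sum_right using j by (intro sum.cong) (auto simp: b_f_e)
  then show ?thesis
    using j by simp
qed

lemma b_e_comb_f: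
  assumes j: "j < \<nu>"
  shows "b (e j) (\<Sum>i<\<nu>. scale (c i) (f i)) = c j"
proof -
  have "b (e j) (\<Sum>i<\<nu>. scale (c i) (f i)) = (\<Sum>i<\<nu>. if j = i then c i else 0)"
    unfolding b_sum_right using j by (intro sum.cong) (auto simp: b_e_f)
  then show ?thesis
    using j by simp
qed

lemma b_e_comb_e: "j < \<nu> \<Longrightarrow> b (e j) (\<Sum>i<\<nu>. scale (c i) (e i)) = 0"
  unfolding b_sum_right by (intro sum.neutral) (auto simp: b_e_e)

lemma b_f_comb_f: "j < \<nu> \<Longrightarrow> b (f j) (\<Sum>i<\<nu>. scale (c i) (f i)) = 0"
  unfolding b_sum_right by (intro sum.neutral) (auto simp: b_f_f)

lemma proj_A_in_A: "proj_A x \<in> A"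
  unfolding A_def proj_A_def by (simp add: b_f_comb_e b_e_comb_f b_e_comb_e b_f_comb_f)

lemma witt_decomposition:
  "x = (\<Sum>i<\<nu>. scale (b (f i) x) (e i)) + (\<Sum>i<\<nu>. scale (b (e i) x) (f i)) + proj_A x"
  unfolding proj_A_def by simp

lemma b_e_A: "a \<in> A \<Longrightarrow> k < \<nu> \<Longrightarrow> b (e k) a = 0"
  and b_f_A: "a \<in> A \<Longrightarrow> k < \<nu> \<Longrightarrow> b (f k) a = 0"
  unfolding A_def by auto

lemma b_A_e: "a \<in> A \<Longrightarrow> k < \<nu> \<Longrightarrow> b a (e k) = 0"
  and b_A_f: "a \<in> A \<Longrightarrow> k < \<nu> \<Longrightarrow> b a (f k) = 0"
  using b_e_A b_f_A by (metis st_b st_0)+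

lemma span_e_expansion:
  assumes "k \<le> \<nu>" and "w \<in> span (e ` {..<k})"
  shows "w = (\<Sum>i<k. scale (b (f i) w) (e i)) \<and> (\<forall>i<\<nu>. b (e i) w = 0)
     \<and> (\<forall>i. k \<le> i \<and> i < \<nu> \<longrightarrow> b (f i) w = 0)"
proof -
  let ?T = "{w. w = (\<Sum>i<k. scale (b (f i) w) (e i)) \<and> (\<forall>i<\<nu>. b (e i) w = 0)
     \<and> (\<forall>i. k \<le> i \<and> i < \<nu> \<longrightarrow> b (f i) w = 0)}"
  have "subspace ?T"
    unfolding subspace_def
  proof (intro conjI ballI allI)
    fix x y assume x: "x \<in> ?T" and y: "y \<in> ?T"
    have "x + y = (\<Sum>i<k. scale (b (f i) x) (e i)) + (\<Sum>i<k. scale (b (f i) y) (e i))"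
      using x y by simp
    also have "\<dots> = (\<Sum>i<k. scale (b (f i) (x + y)) (e i))"
      by (simp add: sum.distrib scale_left_distrib)
    finally have sum: "x + y = (\<Sum>i<k. scale (b (f i) (x + y)) (e i))" .
    show "x + y \<in> ?T"
      unfolding mem_Collect_eq using x y by (intro conjI sum) auto
  next
    fix c x assume x: "x \<in> ?T"
    have "scale c x = scale c (\<Sum>i<k. scale (b (f i) x) (e i))"
      using x by simp
    also have "\<dots> = (\<Sum>i<k. scale (b (f i) (scale c x)) (e i))"
      by (simp add: scale_sum_right)
    finally have scale: "scale c x = (\<Sum>i<k. scale (b (f i) (scale c x)) (e i))" .
    show "scale c x \<in> ?T"
      unfolding mem_Collect_eq using x by (intro conjI scale) auto
  qed simp
  moreover have "e ` {..<k} \<subseteq> ?T"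
  proof
    fix w assume "w \<in> e ` {..<k}"
    then obtain j where j: "j < k" "w = e j"
      by auto
    have "(\<Sum>i<k. scale (b (f i) (e j)) (e i)) = (\<Sum>i<k. if i = j then e j else 0)"
      using assms(1) j by (intro sum.cong) (auto simp: b_f_e)
    also have "\<dots> = e j"
      using j by simp
    finally show "w \<in> ?T"
      using j assms(1) by (auto simp: b_e_e b_f_e)
  qed
  ultimately have "span (e ` {..<k}) \<subseteq> ?T"
    by (intro span_minimal)
  then show ?thesis
    using assms(2) by blast
qed

lemma span_e_mono: "i \<le> j \<Longrightarrow> span (e ` {..<i}) \<subseteq> span (e ` {..<j})"
  by (intro span_mono image_mono) auto

lemma e_in_E: "i < \<nu> \<Longrightarrow> e i \<in> E"
  unfolding E_def by (simp add: span_base)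

lemma subspace_E: "subspace E"
  unfolding E_def by simp

lemma E_expansion: "w \<in> E \<Longrightarrow> w = (\<Sum>i<\<nu>. scale (b (f i) w) (e i)) \<and> (\<forall>i<\<nu>. b (e i) w = 0)"
  using span_e_expansion[of \<nu> w] unfolding E_def by simp

lemma A_subset_E_perp: "A \<subseteq> E_perp"
  unfolding A_def E_perp_def by auto

lemma b_E_E_perp:
  assumes w: "w \<in> E" and x: "x \<in> E_perp"
  shows "b w x = 0"
proof -
  have "b w x = b (\<Sum>i<\<nu>. scale (b (f i) w) (e i)) x"
    using E_expansion[OF w] by simp
  also have "\<dots> = 0"
    unfolding b_sum_left using x unfolding E_perp_def by simp
  finally show ?thesis .
qed

lemma b_E_perp_E: "w \<in> E \<Longrightarrow> x \<in> E_perp \<Longrightarrow> b x w = 0"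
  using b_E_E_perp by (metis st_b st_0)

lemma isotropic_E_perp_in_E: "y \<in> E_perp \<Longrightarrow> b y y = 0 \<Longrightarrow> y \<in> E"
  using isotropic_orthogonal_in_E unfolding E_perp_def E_def by blast

lemma proj_A_E: "w \<in> E \<Longrightarrow> proj_A w = 0"
  using E_expansion[of w] unfolding proj_A_def by simp

section \<open>Characterisation of \<open>WH\<close>\<close>

text \<open>The conditions characterising \<open>WH\<close> that do not mention nilpotency.\<close>
definition adapted :: "('v \<Rightarrow> 'v) \<Rightarrow> bool" where
  "adapted u \<longleftrightarrow> Vector_Spaces.linear scale scale u \<and> (\<forall>x y. b (u x) y = b x (u y))
     \<and> (\<forall>k<\<nu>. u (e k) \<in> span (e ` {..<k})) \<and> (\<forall>x\<in>E_perp. u x \<in> E)"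

lemma span_e_Suc_remainder:
  assumes "k < \<nu>" and "x \<in> span (e ` {..<Suc k})"
  shows "x - scale (b (f k) x) (e k) \<in> span (e ` {..<k})"
proof -
  have "x = (\<Sum>i<Suc k. scale (b (f i) x) (e i))"
    using span_e_expansion[of "Suc k" x] assms by auto
  then have "x - scale (b (f k) x) (e k) = (\<Sum>i<k. scale (b (f i) x) (e i))"
    by (simp only: sum.lessThan_Suc) (metis add_diff_cancel_right')
  also have "\<dots> \<in> span (e ` {..<k})"
    by (intro span_sum span_scale span_base) auto
  finally show ?thesis .
qed

text \<open>The coefficient of \<open>e k\<close> is multiplied by the constant \<open>c\<close> under \<open>u\<close>, so nilpotency forces
  \<open>c = 0\<close>.\<close>
lemma WH_lowers_e:
  assumes u: "u \<in> WH scale b Fl \<nu>" and k: "k < \<nu>"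
  shows "u (e k) \<in> span (e ` {..<k})"
proof -
  have lin: "Vector_Spaces.linear scale scale u" and "nilpotent_map u"
    and fl: "\<And>j. j \<le> \<nu> \<Longrightarrow> u ` span (e ` {..<j}) \<subseteq> span (e ` {..<j})"
    using u Fl_eq unfolding WH_def herm_endos_def by auto
  then obtain N where N: "u ^^ N = (\<lambda>_. 0)"
    unfolding nilpotent_map_def by auto
  define c where "c = b (f k) (u (e k))"
  have step: "u x \<in> span (e ` {..<Suc k}) \<and> b (f k) (u x) = c * b (f k) x"
    if x: "x \<in> span (e ` {..<Suc k})" for x
  proof
    show "u x \<in> span (e ` {..<Suc k})"
      using fl[of "Suc k"] k x by auto
    define r where "r = x - scale (b (f k) x) (e k)"
    have "u r \<in> span (e ` {..<k})"
      using fl[of k] k span_e_Suc_remainder[OF k x] unfolding r_def by auto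
    then have ur: "b (f k) (u r) = 0"
      using span_e_expansion[of k "u r"] k by auto
    have "u x = scale (b (f k) x) (u (e k)) + u r"
      unfolding r_def using lin by (simp add: endo.linear_diff endo.linear_scale)
    then show "b (f k) (u x) = c * b (f k) x"
      using ur unfolding c_def by simp
  qed
  have pow: "(u ^^ m) x \<in> span (e ` {..<Suc k}) \<and> b (f k) ((u ^^ m) x) = c ^ m * b (f k) x"
    if x: "x \<in> span (e ` {..<Suc k})" for x m
    by (induction m) (use x step in auto)
  have ek: "e k \<in> span (e ` {..<Suc k})"
    by (intro span_base) auto
  have "c ^ N = 0"
    using pow[OF ek, of N] N b_f_e[OF k k] by simp
  then have "c = 0"
    by simp
  then show ?thesis
    using span_e_Suc_remainder[OF k] step[OF ek] unfolding c_def by force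
qed

text \<open>If \<open>u\<^sup>j\<^sup>+\<^sup>1\<close> maps \<open>E_perp\<close> into \<open>E\<close>, then so does \<open>u\<^sup>j\<close>: \<open>y = u\<^sup>j x\<close> lies in
  \<open>E_perp\<close> and is isotropic, because \<open>b y y = b x (u\<^sup>j\<^sup>-\<^sup>1 (u\<^sup>j\<^sup>+\<^sup>1 x))\<close> with
  \<open>x \<in> E_perp\<close> and the second argument in \<open>E\<close>.\<close>
lemma funpow_E_perp_into_E_descend:
  assumes hu: "\<And>x y. b (u x) y = b x (u y)" and uE: "\<And>w. w \<in> E \<Longrightarrow> u w \<in> E"
    and uE_perp: "\<And>y. y \<in> E_perp \<Longrightarrow> u y \<in> E_perp"
    and j: "1 \<le> j" and step: "\<forall>x\<in>E_perp. (u ^^ Suc j) x \<in> E"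
  shows "\<forall>x\<in>E_perp. (u ^^ j) x \<in> E"
proof
  fix x assume x: "x \<in> E_perp"
  have "(u ^^ m) w \<in> E" if "w \<in> E" for w m
    using that uE by (induction m) auto
  then have "(u ^^ (j - 1)) ((u ^^ Suc j) x) \<in> E"
    using step x by blast
  moreover have "j + j = (j - 1) + Suc j"
    using j by simp
  then have "(u ^^ j) ((u ^^ j) x) = (u ^^ (j - 1)) ((u ^^ Suc j) x)"
    by (metis funpow_add comp_apply)
  ultimately have "b ((u ^^ j) x) ((u ^^ j) x) = 0"
    using hermitian_funpow[OF hu] b_E_perp_E[OF _ x] by metis
  moreover have "(u ^^ j) x \<in> E_perp"
    using x uE_perp by (induction j) auto
  ultimately show "(u ^^ j) x \<in> E"
    using isotropic_E_perp_in_E by blast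
qed

lemma WH_maps_E_perp_into_E:
  assumes u: "u \<in> WH scale b Fl \<nu>" and x: "x \<in> E_perp"
  shows "u x \<in> E"
proof -
  have lin: "Vector_Spaces.linear scale scale u" and nil: "nilpotent_map u"
    and hu: "\<And>x y. b (u x) y = b x (u y)" and flag: "\<forall>i\<le>\<nu>. u ` Fl i \<subseteq> Fl i"
    using u unfolding WH_def herm_endos_def by auto
  have uE: "u w \<in> E" if "w \<in> E" for w
    using flag Fl_eq[of \<nu>] that unfolding E_def by blast
  have uE_perp: "u y \<in> E_perp" if y: "y \<in> E_perp" for y
    unfolding E_perp_def
  proof (intro CollectI allI impI)
    fix i assume "i < \<nu>"
    then have "u (e i) \<in> E"
      using uE e_in_E by blast
    then show "b (e i) (u y) = 0"
      using hu b_E_E_perp[OF _ y] by metis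
  qed
  obtain N where N: "u ^^ N = (\<lambda>_. 0)"
    using nil unfolding nilpotent_map_def by auto
  have "(u ^^ m) 0 = 0" for m
    by (induction m) (simp_all add: endo.linear_0[OF lin])
  then have "(u ^^ max N 1) y = 0" for y
    using N funpow_add[of "max N 1 - N" N u] by simp
  then have top: "\<forall>x\<in>E_perp. (u ^^ max N 1) x \<in> E"
    using subspace_E subspace_0 by auto
  have "\<forall>x\<in>E_perp. (u ^^ 1) x \<in> E"
    by (rule inc_induct[where P = "\<lambda>j. \<forall>x\<in>E_perp. (u ^^ j) x \<in> E", of 1 "max N 1"])
      (use top funpow_E_perp_into_E_descend[OF hu uE uE_perp] in auto)
  then show ?thesis
    using x by simp
qed

lemma b_span_e_left:
  assumes "m \<le> \<nu>" "w \<in> span (e ` {..<m})" "\<forall>i<m. b (e i) x = 0"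
  shows "b w x = 0"
proof -
  have "b w x = b (\<Sum>i<m. scale (b (f i) w) (e i)) x"
    using span_e_expansion[OF assms(1,2)] by simp
  also have "\<dots> = 0"
    unfolding b_sum_left using assms(3) by simp
  finally show ?thesis .
qed

lemma adapted_lowers_span_e:
  assumes u: "adapted u" and t: "t \<le> \<nu>"
  shows "u ` span (e ` {..<t}) \<subseteq> span (e ` {..<t - 1})"
proof -
  have "u ` (e ` {..<t}) \<subseteq> span (e ` {..<t - 1})"
  proof
    fix y assume "y \<in> u ` (e ` {..<t})"
    then obtain k where k: "k < t" "y = u (e k)"
      by auto
    then have "y \<in> span (e ` {..<k})"
      using u t unfolding adapted_def by auto
    moreover have "k \<le> t - 1"
      using k by simp
    ultimately show "y \<in> span (e ` {..<t - 1})"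
      using span_e_mono by blast
  qed
  then have "span (u ` (e ` {..<t})) \<subseteq> span (e ` {..<t - 1})"
    by (simp add: span_minimal)
  then show ?thesis
    using u unfolding adapted_def by (simp add: endo.linear_span_image)
qed

lemma adapted_preserves_flag:
  assumes "adapted u" "i \<le> \<nu>"
  shows "u ` span (e ` {..<i}) \<subseteq> span (e ` {..<i})"
  using adapted_lowers_span_e[OF assms] span_e_mono[of "i - 1" i] by auto

lemma adapted_raises_orthogonality:
  assumes u: "adapted u" and m: "m < \<nu>" and x: "\<forall>i<m. b (e i) x = 0"
  shows "\<forall>i<Suc m. b (e i) (u x) = 0"
proof (intro allI impI)
  fix i assume i: "i < Suc m"
  have "b (e i) (u x) = b (u (e i)) x"
    using u unfolding adapted_def by simp
  also have "\<dots> = 0"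
  proof (rule b_span_e_left[of m])
    show "u (e i) \<in> span (e ` {..<m})"
      using u i m span_e_mono[of i m] unfolding adapted_def by auto
  qed (use m x in auto)
  finally show "b (e i) (u x) = 0" .
qed

text \<open>The chain \<open>V \<supseteq> e\<^sub>0\<^sup>\<bottom> \<supseteq> \<dots> \<supseteq> E_perp \<supseteq> E \<supseteq> span e\<^sub><\<^sub>\<nu>\<^sub>-\<^sub>1 \<supseteq> \<dots> \<supseteq> 0\<close> of length \<open>2\<nu> + 1\<close>, along
  which every adapted map moves one step.\<close>
definition adapted_chain :: "nat \<Rightarrow> 'v set" where
  "adapted_chain m =
    (if m \<le> \<nu> then {x. \<forall>i<m. b (e i) x = 0} else span (e ` {..<2 * \<nu> + 1 - m}))"

lemma adapted_chain_step:
  assumes u: "adapted u" and m: "m \<le> 2 * \<nu>" and x: "x \<in> adapted_chain m"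
  shows "u x \<in> adapted_chain (Suc m)"
proof -
  consider "m < \<nu>" | "m = \<nu>" | "\<nu> < m"
    by linarith
  then show ?thesis
  proof cases
    case 1
    then show ?thesis
      using adapted_raises_orthogonality[OF u 1] x unfolding adapted_chain_def by simp
  next
    case 2
    then have "u x \<in> E"
      using u x unfolding adapted_chain_def adapted_def E_perp_def by simp
    then show ?thesis
      using 2 unfolding adapted_chain_def E_def by simp
  next
    case 3
    define t where "t = 2 * \<nu> + 1 - m"
    have t: "t \<le> \<nu>" "2 * \<nu> + 1 - Suc m = t - 1"
      using 3 m unfolding t_def by simp_all
    have "x \<in> span (e ` {..<t})"
      using x 3 unfolding adapted_chain_def t_def by simp
    then have "u x \<in> span (e ` {..<t - 1})"
      using adapted_lowers_span_e[OF u t(1)] by blast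
    then show ?thesis
      using 3 t(2) unfolding adapted_chain_def by simp
  qed
qed

lemma adapted_nilpotent:
  assumes u: "adapted u"
  shows "nilpotent_map u"
proof -
  have pow: "(u ^^ m) x \<in> adapted_chain m" if "m \<le> 2 * \<nu> + 1" for m x
    using that
  proof (induction m)
    case 0
    then show ?case
      unfolding adapted_chain_def by simp
  next
    case (Suc m)
    then show ?case
      using adapted_chain_step[OF u, of m "(u ^^ m) x"] by simp
  qed
  have "(u ^^ (2 * \<nu> + 1)) x = 0" for x
    using pow[of "2 * \<nu> + 1" x] unfolding adapted_chain_def by (cases \<nu>) auto
  then show ?thesis
    unfolding nilpotent_map_def by (intro exI[of _ "2 * \<nu> + 1"]) auto
qed

lemma WH_iff_adapted: "u \<in> WH scale b Fl \<nu> \<longleftrightarrow> adapted u"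
proof
  assume "u \<in> WH scale b Fl \<nu>"
  then show "adapted u"
    unfolding adapted_def using WH_lowers_e WH_maps_E_perp_into_E
    unfolding WH_def herm_endos_def by auto
next
  assume "adapted u"
  then show "u \<in> WH scale b Fl \<nu>"
    unfolding WH_def herm_endos_def using adapted_nilpotent adapted_preserves_flag Fl_eq
    unfolding adapted_def by auto
qed

section \<open>A \<open>K\<close>-basis of \<open>WH\<close>\<close>

lemma adapted_zero: "adapted (\<lambda>_. 0)"
  unfolding adapted_def using endo.linear_zero subspace_0[OF subspace_E] by (simp add: span_zero)

lemma adapted_add: "adapted u \<Longrightarrow> adapted v \<Longrightarrow> adapted (\<lambda>x. u x + v x)"
  unfolding adapted_def using endo.linear_compose_add subspace_add[OF subspace_E]
  by (simp add: span_add)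

lemma adapted_scale: "adapted u \<Longrightarrow> st k = k \<Longrightarrow> adapted (\<lambda>x. scale k (u x))"
  unfolding adapted_def using endo.linear_compose_scale_right subspace_scale[OF subspace_E]
  by (simp add: span_scale)

lemma adapted_diff: "adapted u \<Longrightarrow> adapted v \<Longrightarrow> adapted (\<lambda>x. u x - v x)"
  using adapted_add[of u "\<lambda>x. scale (-1) (v x)"] adapted_scale[of v "-1"] by simp

lemma adapted_sum: "finite S \<Longrightarrow> (\<And>s. s \<in> S \<Longrightarrow> adapted (g s)) \<Longrightarrow> adapted (\<Sum>s\<in>S. g s)"
proof (induction S rule: finite_induct)
  case empty
  then show ?case
    using adapted_zero by (simp add: zero_fun_def)
next
  case (insert s S)
  then show ?case
    using adapted_add[of "g s" "\<Sum>s\<in>S. g s"] by (simp add: plus_fun_def)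
qed

definition herm_rank1 :: "'v \<Rightarrow> 'v \<Rightarrow> 'v" where
  "herm_rank1 p = (\<lambda>x. scale (b p x) p)"

definition herm_rank2 :: "'v \<Rightarrow> 'v \<Rightarrow> 'f \<Rightarrow> 'v \<Rightarrow> 'v" where
  "herm_rank2 p q c = (\<lambda>x. scale (c * b q x) p + scale (st c * b p x) q)"

lemma linear_herm_rank1: "Vector_Spaces.linear scale scale (herm_rank1 p)"
  unfolding Vector_Spaces.linear_iff herm_rank1_def using vector_space_axioms
  by (simp add: scale_left_distrib)

lemma linear_herm_rank2: "Vector_Spaces.linear scale scale (herm_rank2 p q c)"
  unfolding Vector_Spaces.linear_iff herm_rank2_def using vector_space_axioms
  by (simp add: algebra_simps)

lemma hermitian_herm_rank1: "b (herm_rank1 p x) y = b x (herm_rank1 p y)"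
  unfolding herm_rank1_def by (simp add: mult.commute)

lemma hermitian_herm_rank2: "b (herm_rank2 p q c x) y = b x (herm_rank2 p q c y)"
  unfolding herm_rank2_def by (simp add: algebra_simps)

lemma adapted_herm_rank1_e: "p < \<nu> \<Longrightarrow> adapted (herm_rank1 (e p))"
  unfolding adapted_def E_perp_def using linear_herm_rank1 hermitian_herm_rank1
  by (simp add: herm_rank1_def b_e_e span_zero subspace_0[OF subspace_E])

lemma adapted_herm_rank2_e_e: "p < \<nu> \<Longrightarrow> q < \<nu> \<Longrightarrow> adapted (herm_rank2 (e p) (e q) c)"
  unfolding adapted_def E_perp_def using linear_herm_rank2 hermitian_herm_rank2
  by (simp add: herm_rank2_def b_e_e span_zero subspace_0[OF subspace_E])

lemma adapted_herm_rank2_e_A: "p < \<nu> \<Longrightarrow> a \<in> A \<Longrightarrow> adapted (herm_rank2 (e p) a c)"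
  unfolding adapted_def E_perp_def using linear_herm_rank2 hermitian_herm_rank2
  by (simp add: herm_rank2_def b_e_e b_A_e span_zero subspace_scale[OF subspace_E] e_in_E)

lemma adapted_herm_rank2_e_f:
  assumes qp: "q < p" and p: "p < \<nu>"
  shows "adapted (herm_rank2 (e q) (f p) c)"
proof -
  have "herm_rank2 (e q) (f p) c (e k) \<in> span (e ` {..<k})" if "k < \<nu>" for k
  proof (cases "p = k")
    case True
    then have "herm_rank2 (e q) (f p) c (e k) = scale c (e q)"
      unfolding herm_rank2_def using that qp by (simp add: b_f_e b_e_e)
    also have "\<dots> \<in> span (e ` {..<k})"
      using True qp by (intro span_scale span_base) auto
    finally show ?thesis .
  next
    case False
    then have "herm_rank2 (e q) (f p) c (e k) = 0"
      unfolding herm_rank2_def using that qp p by (simp add: b_f_e b_e_e)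
    then show ?thesis
      by (simp add: span_zero)
  qed
  moreover have "herm_rank2 (e q) (f p) c x \<in> E" if "x \<in> E_perp" for x
  proof -
    have "herm_rank2 (e q) (f p) c x = scale (c * b (f p) x) (e q)"
      unfolding herm_rank2_def using that qp p unfolding E_perp_def by simp
    also have "\<dots> \<in> E"
      using qp p by (intro subspace_scale[OF subspace_E] e_in_E) auto
    finally show ?thesis .
  qed
  ultimately show ?thesis
    unfolding adapted_def using linear_herm_rank2 hermitian_herm_rank2 by blast
qed

definition A_basis :: "'v set" where
  "A_basis = (SOME B. B \<subseteq> A \<and> independent B \<and> A \<subseteq> span B)"

lemma A_basis: "A_basis \<subseteq> A" "independent A_basis" "A \<subseteq> span A_basis" "finite A_basis"
proof -
  have "\<exists>B. B \<subseteq> A \<and> independent B \<and> A \<subseteq> span B"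
    by (meson basis_exists)
  from someI_ex[OF this] show "A_basis \<subseteq> A" "independent A_basis" "A \<subseteq> span A_basis"
    unfolding A_basis_def by auto
  then show "finite A_basis"
    using finiteI_independent by blast
qed

lemma A_basis_expansion: "y \<in> A \<Longrightarrow> \<exists>g. y = (\<Sum>a\<in>A_basis. scale (g a) a)"
  using A_basis(3,4) span_finite[OF A_basis(4)] by auto

lemma A_basis_coeffs_unique:
  assumes "(\<Sum>a\<in>A_basis. scale (g a) a) = (\<Sum>a\<in>A_basis. scale (h a) a)" and "a \<in> A_basis"
  shows "g a = h a"
proof -
  have "(\<Sum>a\<in>A_basis. scale (g a - h a) a) = 0"
    using assms(1) by (simp add: scale_left_diff_distrib sum_subtractf)
  then show ?thesis
    using A_basis(2) assms(2) unfolding independent_explicit by auto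
qed

text \<open>Index set of the \<open>K\<close>-basis of \<open>WH\<close>: \<open>Inl (p, q, r)\<close> stands for \<open>herm_rank1 (e p)\<close>
  if \<open>p = q\<close> (then \<open>r = False\<close>), for \<open>herm_rank2 (e p) (e q)\<close> if \<open>p < q\<close> and for
  \<open>herm_rank2 (e q) (f p)\<close> if \<open>q < p\<close>; \<open>Inr (p, a, r)\<close> stands for \<open>herm_rank2 (e p) a\<close>;
  in the rank-two cases \<open>r\<close> selects the coefficient \<open>1\<close> or \<open>\<theta>\<close>.\<close>
definition pair_index :: "(nat \<times> nat \<times> bool) set" where
  "pair_index = {(p, q, r). p < \<nu> \<and> q < \<nu> \<and> (p \<noteq> q \<or> \<not> r)}"

definition aniso_index :: "(nat \<times> 'v \<times> bool) set" where
  "aniso_index = {(p, a, r). p < \<nu> \<and> a \<in> A_basis}"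

definition generator_index :: "((nat \<times> nat \<times> bool) + (nat \<times> 'v \<times> bool)) set" where
  "generator_index = Inl ` pair_index \<union> Inr ` aniso_index"

definition generator :: "(nat \<times> nat \<times> bool) + (nat \<times> 'v \<times> bool) \<Rightarrow> 'v \<Rightarrow> 'v" where
  "generator s = (case s of
      Inl (p, q, r) \<Rightarrow>
        if p = q then herm_rank1 (e p)
        else if p < q then herm_rank2 (e p) (e q) (fixed_basis r)
        else herm_rank2 (e q) (f p) (fixed_basis r)
    | Inr (p, a, r) \<Rightarrow> herm_rank2 (e p) a (fixed_basis r))"

lemma generator_diag: "generator (Inl (p, p, r)) = herm_rank1 (e p)"
  and generator_upper: "p < q \<Longrightarrow> generator (Inl (p, q, r)) = herm_rank2 (e p) (e q) (fixed_basis r)"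
  and generator_lower: "q < p \<Longrightarrow> generator (Inl (p, q, r)) = herm_rank2 (e q) (f p) (fixed_basis r)"
  and generator_aniso: "generator (Inr (p, a, r)) = herm_rank2 (e p) a (fixed_basis r)"
  unfolding generator_def by simp_all

lemma finite_pair_index: "finite pair_index"
proof -
  have "pair_index \<subseteq> {..<\<nu>} \<times> {..<\<nu>} \<times> UNIV"
    unfolding pair_index_def by auto
  then show ?thesis
    by (rule finite_subset) auto
qed

lemma aniso_index_eq: "aniso_index = {..<\<nu>} \<times> A_basis \<times> UNIV"
  unfolding aniso_index_def by auto

lemma finite_generator_index: "finite generator_index"
  unfolding generator_index_def aniso_index_eq using finite_pair_index A_basis(4) by simp

lemma generator_index_cases:
  assumes "s \<in> generator_index"
  obtains (diag) p r where "s = Inl (p, p, r)" "p < \<nu>" "\<not> r"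
    | (upper) p q r where "s = Inl (p, q, r)" "p < q" "q < \<nu>"
    | (lower) p q r where "s = Inl (p, q, r)" "q < p" "p < \<nu>"
    | (aniso) p a r where "s = Inr (p, a, r)" "p < \<nu>" "a \<in> A_basis"
proof -
  consider (pair) p q r where "s = Inl (p, q, r)" "(p, q, r) \<in> pair_index"
    | (aniso) p a r where "s = Inr (p, a, r)" "(p, a, r) \<in> aniso_index"
    using assms unfolding generator_index_def by auto
  then show ?thesis
  proof cases
    case pair
    then show ?thesis
      using that unfolding pair_index_def by (cases p q rule: linorder_cases) auto
  next
    case aniso
    then show ?thesis
      using that unfolding aniso_index_def by auto
  qed
qed

lemma adapted_generator: "s \<in> generator_index \<Longrightarrow> adapted (generator s)"
  by (cases rule: generator_index_cases)
    (use A_basis(1) in \<open>auto simp: generator_diag generator_upper generator_lower generator_aniso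
      adapted_herm_rank1_e adapted_herm_rank2_e_e adapted_herm_rank2_e_f adapted_herm_rank2_e_A\<close>)

definition comb :: "((nat \<times> nat \<times> bool) + (nat \<times> 'v \<times> bool) \<Rightarrow> 'f) \<Rightarrow> 'v \<Rightarrow> 'v" where
  "comb x = (\<Sum>s\<in>generator_index. (\<lambda>y. scale (x s) (generator s y)))"

lemma comb_apply: "comb x y = (\<Sum>s\<in>generator_index. scale (x s) (generator s y))"
  unfolding comb_def sum_apply ..

lemma adapted_comb: "(\<And>s. s \<in> generator_index \<Longrightarrow> st (x s) = x s) \<Longrightarrow> adapted (comb x)"
  unfolding comb_def
  by (rule adapted_sum[OF finite_generator_index]) (auto intro: adapted_scale adapted_generator)

lemma b_f_comb_f_diag:
  assumes i: "i < \<nu>"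
  shows "b (f i) (comb x (f i)) = x (Inl (i, i, False))"
proof -
  have mem: "Inl (i, i, False) \<in> generator_index"
    unfolding generator_index_def pair_index_def using i by auto
  have "b (f i) (comb x (f i)) = (\<Sum>s\<in>generator_index. x s * b (f i) (generator s (f i)))"
    unfolding comb_apply b_sum_right by simp
  also have "\<dots> = x (Inl (i, i, False)) * b (f i) (generator (Inl (i, i, False)) (f i))"
  proof (rule sum_eq_single[OF finite_generator_index mem])
    fix s assume s: "s \<in> generator_index" "s \<noteq> Inl (i, i, False)"
    from s(1) show "x s * b (f i) (generator s (f i)) = 0"
      by (cases rule: generator_index_cases)
        (use s i A_basis(1) in \<open>auto simp: generator_diag generator_upper generator_lower
          generator_aniso herm_rank1_def herm_rank2_def b_f_e b_f_f b_e_e b_e_f b_f_A b_A_f\<close>)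
  qed
  also have "\<dots> = x (Inl (i, i, False))"
    using i by (simp add: generator_diag herm_rank1_def b_f_e b_e_f)
  finally show ?thesis .
qed

lemma b_f_comb_f_upper:
  assumes ij: "i < j" and j: "j < \<nu>"
  shows "b (f i) (comb x (f j)) = x (Inl (i, j, False)) + x (Inl (i, j, True)) * \<theta>"
proof -
  have mem: "Inl (i, j, False) \<in> generator_index" "Inl (i, j, True) \<in> generator_index"
    unfolding generator_index_def pair_index_def using ij j by auto
  have "b (f i) (comb x (f j)) = (\<Sum>s\<in>generator_index. x s * b (f i) (generator s (f j)))"
    unfolding comb_apply b_sum_right by simp
  also have "\<dots> = x (Inl (i, j, False)) * b (f i) (generator (Inl (i, j, False)) (f j))
      + x (Inl (i, j, True)) * b (f i) (generator (Inl (i, j, True)) (f j))"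
  proof (rule sum_eq_pair[OF finite_generator_index mem])
    fix s assume s: "s \<in> generator_index" "s \<noteq> Inl (i, j, False)" "s \<noteq> Inl (i, j, True)"
    from s(1) show "x s * b (f i) (generator s (f j)) = 0"
    proof (cases rule: generator_index_cases)
      case (upper p q r)
      then show ?thesis
        using s ij j by (cases r) (auto simp: generator_upper herm_rank2_def b_f_e b_f_f b_e_e b_e_f)
    qed (use s ij j A_basis(1) in \<open>auto simp: generator_diag generator_lower generator_aniso
        herm_rank1_def herm_rank2_def b_f_e b_f_f b_e_e b_e_f b_f_A b_A_f\<close>)
  qed simp
  also have "\<dots> = x (Inl (i, j, False)) + x (Inl (i, j, True)) * \<theta>"
    using ij j by (simp add: generator_upper herm_rank2_def b_f_e b_e_f fixed_basis_def)
  finally show ?thesis .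
qed

lemma b_f_comb_e_lower:
  assumes ji: "j < i" and i: "i < \<nu>"
  shows "b (f j) (comb x (e i)) = x (Inl (i, j, False)) + x (Inl (i, j, True)) * \<theta>"
proof -
  have mem: "Inl (i, j, False) \<in> generator_index" "Inl (i, j, True) \<in> generator_index"
    unfolding generator_index_def pair_index_def using ji i by auto
  have "b (f j) (comb x (e i)) = (\<Sum>s\<in>generator_index. x s * b (f j) (generator s (e i)))"
    unfolding comb_apply b_sum_right by simp
  also have "\<dots> = x (Inl (i, j, False)) * b (f j) (generator (Inl (i, j, False)) (e i))
      + x (Inl (i, j, True)) * b (f j) (generator (Inl (i, j, True)) (e i))"
  proof (rule sum_eq_pair[OF finite_generator_index mem])
    fix s assume s: "s \<in> generator_index" "s \<noteq> Inl (i, j, False)" "s \<noteq> Inl (i, j, True)"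
    from s(1) show "x s * b (f j) (generator s (e i)) = 0"
    proof (cases rule: generator_index_cases)
      case (lower p q r)
      then show ?thesis
        using s ji i by (cases r) (auto simp: generator_lower herm_rank2_def b_f_e b_e_e b_e_f)
    qed (use s ji i A_basis(1) in \<open>auto simp: generator_diag generator_upper generator_aniso
        herm_rank1_def herm_rank2_def b_f_e b_f_f b_e_e b_e_f b_A_e\<close>)
  qed simp
  also have "\<dots> = x (Inl (i, j, False)) + x (Inl (i, j, True)) * \<theta>"
    using ji i by (simp add: generator_lower herm_rank2_def b_f_e b_e_e fixed_basis_def)
  finally show ?thesis .
qed

lemma linear_proj_A: "Vector_Spaces.linear scale scale proj_A"
  unfolding Vector_Spaces.linear_iff proj_A_def using vector_space_axioms
  by (simp add: algebra_simps sum.distrib scale_sum_right)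

lemma proj_A_e: "q < \<nu> \<Longrightarrow> proj_A (e q) = 0"
  using proj_A_E e_in_E by blast

lemma proj_A_f:
  assumes p: "p < \<nu>"
  shows "proj_A (f p) = 0"
proof -
  have "(\<Sum>i<\<nu>. scale (b (f i) (f p)) (e i)) = 0"
    using p by (intro sum.neutral) (auto simp: b_f_f)
  moreover have "(\<Sum>i<\<nu>. scale (b (e i) (f p)) (f i)) = (\<Sum>i<\<nu>. if i = p then f i else 0)"
    using p by (intro sum.cong) (auto simp: b_e_f)
  ultimately show ?thesis
    unfolding proj_A_def using p by simp
qed

lemma proj_A_A: "a \<in> A \<Longrightarrow> proj_A a = a"
  unfolding proj_A_def A_def by simp

lemma proj_A_generator_f:
  assumes s: "s \<in> generator_index" and k: "k < \<nu>"
  shows "proj_A (generator s (f k))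
    = (case s of Inr (p, a, r) \<Rightarrow> if p = k then scale (st (fixed_basis r)) a else 0 | _ \<Rightarrow> 0)"
  using s
proof (cases rule: generator_index_cases)
  case (aniso p a r)
  then show ?thesis
    using k A_basis(1) by (auto simp: generator_aniso herm_rank2_def endo.linear_add[OF linear_proj_A]
        endo.linear_scale[OF linear_proj_A] proj_A_e proj_A_A b_A_f b_e_f)
qed (use k in \<open>simp_all add: generator_diag generator_upper generator_lower herm_rank1_def herm_rank2_def
    endo.linear_add[OF linear_proj_A] endo.linear_scale[OF linear_proj_A] proj_A_e proj_A_f\<close>)

lemma proj_A_comb_f:
  assumes k: "k < \<nu>"
  shows "proj_A (comb x (f k))
    = (\<Sum>a\<in>A_basis. scale (x (Inr (k, a, False)) + x (Inr (k, a, True)) * st \<theta>) a)"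
proof -
  define h where "h s = scale (x s) (proj_A (generator s (f k)))" for s
  let ?J = "(\<lambda>(a, r). Inr (k, a, r)) ` (A_basis \<times> UNIV)"
  have "?J \<subseteq> generator_index"
    unfolding generator_index_def aniso_index_def using k by auto
  moreover have "h s = 0" if "s \<in> generator_index - ?J" for s
    using that proj_A_generator_f[of s k] k unfolding h_def generator_index_def aniso_index_def
    by (auto split: sum.splits)
  ultimately have "proj_A (comb x (f k)) = (\<Sum>s\<in>?J. h s)"
    unfolding comb_apply h_def
    by (simp add: endo.linear_sum[OF linear_proj_A] endo.linear_scale[OF linear_proj_A]
        sum.mono_neutral_right[OF finite_generator_index])
  also have "\<dots> = (\<Sum>a\<in>A_basis. \<Sum>r\<in>UNIV. h (Inr (k, a, r)))"
    by (simp add: sum.reindex inj_on_def sum.cartesian_product case_prod_beta)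
  also have "\<dots> = (\<Sum>a\<in>A_basis. scale (x (Inr (k, a, False)) + x (Inr (k, a, True)) * st \<theta>) a)"
    unfolding UNIV_bool using k
    by (intro sum.cong) (auto simp: h_def proj_A_generator_f generator_index_def aniso_index_def
        fixed_basis_def scale_left_distrib)
  finally show ?thesis .
qed

lemma b_proj_A_A:
  assumes a: "a \<in> A"
  shows "b y a = b (proj_A y) a"
proof -
  have "b y a = b ((\<Sum>i<\<nu>. scale (b (f i) y) (e i)) + (\<Sum>i<\<nu>. scale (b (e i) y) (f i)) + proj_A y) a"
    using witt_decomposition[of y] by simp
  also have "\<dots> = b (proj_A y) a"
    using a unfolding b_add_left b_sum_left by (simp add: b_e_A b_f_A)
  finally show ?thesis .
qed

text \<open>The map kills first the \<open>e k\<close> (their images lie in \<open>E\<close>), then \<open>A\<close> (as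
  \<open>b (f i) (d a) = b (proj_A (d (f i))) a\<close>), then the \<open>f k\<close>.\<close>
lemma adapted_eq_0_if_coords_vanish:
  assumes d: "adapted d"
    and ff: "\<And>i j. i < \<nu> \<Longrightarrow> j < \<nu> \<Longrightarrow> b (f i) (d (f j)) = 0"
    and fe: "\<And>i j. i < \<nu> \<Longrightarrow> j < \<nu> \<Longrightarrow> b (f j) (d (e i)) = 0"
    and fA: "\<And>k. k < \<nu> \<Longrightarrow> proj_A (d (f k)) = 0"
  shows "d y = 0"
proof -
  have lin: "Vector_Spaces.linear scale scale d" and hd: "\<And>x y. b (d x) y = b x (d y)"
    and dE: "\<And>x. x \<in> E_perp \<Longrightarrow> d x \<in> E"
    using d unfolding adapted_def by auto
  have de: "d (e k) = 0" if k: "k < \<nu>" for k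
  proof -
    have "d (e k) \<in> E"
      using d k span_e_mono[of k \<nu>] unfolding adapted_def E_def by auto
    then show ?thesis
      using E_expansion[of "d (e k)"] fe k by simp
  qed
  have da: "d a = 0" if a: "a \<in> A" for a
  proof -
    have "b (f i) (d a) = 0" if "i < \<nu>" for i
      using hd[of "f i" a] b_proj_A_A[OF a, of "d (f i)"] fA that by simp
    moreover have "d a \<in> E"
      using dE a A_subset_E_perp by blast
    ultimately show ?thesis
      using E_expansion[of "d a"] by simp
  qed
  have df: "d (f k) = 0" if k: "k < \<nu>" for k
  proof -
    have "b (e i) (d (f k)) = 0" if "i < \<nu>" for i
      using hd[of "e i" "f k"] de that by simp
    then show ?thesis
      using witt_decomposition[of "d (f k)"] ff fA k by simp
  qed
  have "d y = d ((\<Sum>i<\<nu>. scale (b (f i) y) (e i)) + (\<Sum>i<\<nu>. scale (b (e i) y) (f i)) + proj_A y)"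
    using witt_decomposition[of y] by simp
  also have "\<dots> = 0"
    using de df da[OF proj_A_in_A[of y]]
    by (simp add: endo.linear_add[OF lin] endo.linear_sum[OF lin] endo.linear_scale[OF lin])
  finally show ?thesis .
qed

definition A_coords :: "'v \<Rightarrow> 'v \<Rightarrow> 'f" where
  "A_coords y = (SOME g. y = (\<Sum>a\<in>A_basis. scale (g a) a))"

lemma A_coords: "y \<in> A \<Longrightarrow> y = (\<Sum>a\<in>A_basis. scale (A_coords y a) a)"
  unfolding A_coords_def using A_basis_expansion by (rule someI_ex)

definition WH_coords :: "('v \<Rightarrow> 'v) \<Rightarrow> (nat \<times> nat \<times> bool) + (nat \<times> 'v \<times> bool) \<Rightarrow> 'f" where
  "WH_coords u s = (case s of
      Inl (p, q, r) \<Rightarrow>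
        if p = q then b (f p) (u (f p))
        else if p < q then fixed_coord r (b (f p) (u (f q)))
        else fixed_coord r (b (f q) (u (e p)))
    | Inr (p, a, r) \<Rightarrow> fixed_coord r (st (A_coords (proj_A (u (f p))) a)))"

lemma st_WH_coords:
  assumes "adapted u"
  shows "st (WH_coords u s) = WH_coords u s"
proof -
  have "st (b (f p) (u (f p))) = b (f p) (u (f p))" for p
    using assms unfolding adapted_def by simp
  then show ?thesis
    unfolding WH_coords_def by (simp split: sum.split prod.split)
qed

lemma b_f_comb_WH_coords_f:
  assumes "i \<le> j" "j < \<nu>"
  shows "b (f i) (comb (WH_coords u) (f j)) = b (f i) (u (f j))"
  using assms b_f_comb_f_diag[of j] b_f_comb_f_upper[of i j]
  by (cases "i = j") (simp_all add: WH_coords_def fixed_coord_sum)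

lemma b_f_comb_WH_coords_e:
  assumes "j < i" "i < \<nu>"
  shows "b (f j) (comb (WH_coords u) (e i)) = b (f j) (u (e i))"
  using assms b_f_comb_e_lower[of j i] by (simp add: WH_coords_def fixed_coord_sum)

lemma proj_A_comb_WH_coords_f:
  assumes k: "k < \<nu>"
  shows "proj_A (comb (WH_coords u) (f k)) = proj_A (u (f k))"
proof -
  have "WH_coords u (Inr (k, a, False)) + WH_coords u (Inr (k, a, True)) * st \<theta>
      = A_coords (proj_A (u (f k))) a" for a
    using arg_cong[OF fixed_coord_sum[of "st (A_coords (proj_A (u (f k))) a)"], of st]
    by (simp add: WH_coords_def)
  then show ?thesis
    using proj_A_comb_f[OF k] A_coords[OF proj_A_in_A] by simp
qed

lemma adapted_eq_comb_WH_coords: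
  assumes u: "adapted u"
  shows "u = comb (WH_coords u)"
proof -
  define d where "d y = u y - comb (WH_coords u) y" for y
  have d: "adapted d"
    unfolding d_def using adapted_diff[OF u adapted_comb] st_WH_coords[OF u] by blast
  have ff: "b (f i) (d (f j)) = 0" if "i < \<nu>" "j < \<nu>" for i j
  proof (cases "i \<le> j")
    case True
    then show ?thesis
      unfolding d_def using b_f_comb_WH_coords_f that by simp
  next
    case False
    then have "b (f j) (d (f i)) = 0"
      unfolding d_def using b_f_comb_WH_coords_f that by simp
    then show ?thesis
      using d unfolding adapted_def by (metis st_b st_0)
  qed
  have fe: "b (f j) (d (e i)) = 0" if "i < \<nu>" "j < \<nu>" for i j
  proof (cases "j < i")
    case True
    then show ?thesis
      unfolding d_def using b_f_comb_WH_coords_e that by simp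
  next
    case False
    then show ?thesis
      using d that span_e_expansion[of i "d (e i)"] unfolding adapted_def by auto
  qed
  have "proj_A (d (f k)) = 0" if "k < \<nu>" for k
    unfolding d_def using that proj_A_comb_WH_coords_f endo.linear_diff[OF linear_proj_A] by simp
  then have "d y = 0" for y
    using adapted_eq_0_if_coords_vanish[OF d ff fe] by blast
  then show ?thesis
    unfolding d_def by (auto simp: fun_eq_iff)
qed

lemma comb_coords_unique:
  assumes xK: "\<forall>s\<in>generator_index. st (x s) = x s" and yK: "\<forall>s\<in>generator_index. st (y s) = y s"
    and eq: "comb x = comb y"
  shows "\<forall>s\<in>generator_index. x s = y s"
proof
  have coord_pair: "x (t r) = y (t r)"
    if "\<And>r. t r \<in> generator_index"
      and "x (t False) + x (t True) * \<theta> = y (t False) + y (t True) * \<theta>"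
    for t :: "bool \<Rightarrow> (nat \<times> nat \<times> bool) + (nat \<times> 'v \<times> bool)" and r
    using fixed_coords_unique_bool[of "\<lambda>r. x (t r)" "\<lambda>r. y (t r)"] that xK yK by blast
  fix s assume "s \<in> generator_index"
  then show "x s = y s"
  proof (cases rule: generator_index_cases)
    case (diag p r)
    then show ?thesis
      using b_f_comb_f_diag[of p x] b_f_comb_f_diag[of p y] eq by simp
  next
    case (upper p q r)
    then have "x (Inl (p, q, False)) + x (Inl (p, q, True)) * \<theta>
        = y (Inl (p, q, False)) + y (Inl (p, q, True)) * \<theta>"
      using b_f_comb_f_upper[of p q x] b_f_comb_f_upper[of p q y] eq by simp
    then show ?thesis
      using coord_pair[of "\<lambda>r. Inl (p, q, r)" r] upper
      unfolding generator_index_def pair_index_def by auto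
  next
    case (lower p q r)
    then have "x (Inl (p, q, False)) + x (Inl (p, q, True)) * \<theta>
        = y (Inl (p, q, False)) + y (Inl (p, q, True)) * \<theta>"
      using b_f_comb_e_lower[of q p x] b_f_comb_e_lower[of q p y] eq by simp
    then show ?thesis
      using coord_pair[of "\<lambda>r. Inl (p, q, r)" r] lower
      unfolding generator_index_def pair_index_def by auto
  next
    case (aniso p a r)
    have mem: "Inr (p, a, r') \<in> generator_index" for r'
      using aniso unfolding generator_index_def aniso_index_def by auto
    have "(\<Sum>a\<in>A_basis. scale (x (Inr (p, a, False)) + x (Inr (p, a, True)) * st \<theta>) a)
        = (\<Sum>a\<in>A_basis. scale (y (Inr (p, a, False)) + y (Inr (p, a, True)) * st \<theta>) a)"
      using proj_A_comb_f[of p x] proj_A_comb_f[of p y] aniso eq by simp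
    from arg_cong[OF A_basis_coeffs_unique[OF this aniso(3)], of st]
    have "x (Inr (p, a, False)) + x (Inr (p, a, True)) * \<theta>
        = y (Inr (p, a, False)) + y (Inr (p, a, True)) * \<theta>"
      using mem xK yK by simp
    then show ?thesis
      using coord_pair[of "\<lambda>r. Inr (p, a, r)" r] mem aniso by simp
  qed
qed

lemma inj_on_e: "inj_on e {..<\<nu>}"
proof (rule inj_onI)
  fix i j assume "i \<in> {..<\<nu>}" "j \<in> {..<\<nu>}" "e i = e j"
  then show "i = j"
    using b_f_e[of i i] b_f_e[of i j] by (auto split: if_splits)
qed

lemma inj_on_f: "inj_on f {..<\<nu>}"
proof (rule inj_onI)
  fix i j assume "i \<in> {..<\<nu>}" "j \<in> {..<\<nu>}" "f i = f j"
  then show "i = j"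
    using b_e_f[of i i] b_e_f[of i j] by (auto split: if_splits)
qed

lemma e_f_A_basis_disjoint:
  "e ` {..<\<nu>} \<inter> f ` {..<\<nu>} = {}" "(e ` {..<\<nu>} \<union> f ` {..<\<nu>}) \<inter> A_basis = {}"
proof -
  show "e ` {..<\<nu>} \<inter> f ` {..<\<nu>} = {}"
    using b_e_e b_e_f by (fastforce split: if_splits)
  show "(e ` {..<\<nu>} \<union> f ` {..<\<nu>}) \<inter> A_basis = {}"
    using A_basis(1) b_f_e b_e_f b_f_A b_e_A by fastforce
qed

definition witt_basis :: "'v set" where
  "witt_basis = e ` {..<\<nu>} \<union> f ` {..<\<nu>} \<union> A_basis"

lemma card_witt_basis: "card witt_basis = 2 * \<nu> + card A_basis"
  unfolding witt_basis_def using e_f_A_basis_disjoint A_basis(4) inj_on_e inj_on_f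
  by (simp add: card_Un_disjoint card_image)

lemma span_witt_basis: "UNIV \<subseteq> span witt_basis"
proof
  fix x :: 'v
  have "x = (\<Sum>i<\<nu>. scale (b (f i) x) (e i)) + (\<Sum>i<\<nu>. scale (b (e i) x) (f i)) + proj_A x"
    by (rule witt_decomposition)
  also have "\<dots> \<in> span witt_basis"
  proof (intro span_add span_sum span_scale)
    fix i assume "i \<in> {..<\<nu>}"
    then show "e i \<in> span witt_basis" "f i \<in> span witt_basis"
      unfolding witt_basis_def by (auto intro: span_base)
  next
    have "proj_A x \<in> span A_basis"
      using proj_A_in_A A_basis(3) by blast
    then show "proj_A x \<in> span witt_basis"
      using span_mono[of A_basis witt_basis] unfolding witt_basis_def by auto
  qed
  finally show "x \<in> span witt_basis" .
qed

lemma independent_witt_basis: "independent witt_basis"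
  unfolding independent_explicit
proof (intro conjI allI impI ballI)
  show fin: "finite witt_basis"
    unfolding witt_basis_def using A_basis(4) by simp
  fix c v assume z: "(\<Sum>v\<in>witt_basis. scale (c v) v) = 0" and v: "v \<in> witt_basis"
  let ?a = "\<Sum>v\<in>A_basis. scale (c v) v"
  have "(\<Sum>v\<in>witt_basis. scale (c v) v)
      = (\<Sum>i<\<nu>. scale (c (e i)) (e i)) + (\<Sum>i<\<nu>. scale (c (f i)) (f i)) + ?a"
    unfolding witt_basis_def using e_f_A_basis_disjoint A_basis(4) inj_on_e inj_on_f
    by (simp add: sum.union_disjoint sum.reindex)
  with z have z': "(\<Sum>i<\<nu>. scale (c (e i)) (e i)) + (\<Sum>i<\<nu>. scale (c (f i)) (f i)) + ?a = 0"
    by simp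
  have "?a \<in> A"
    unfolding A_def using A_basis(1) by (auto simp: b_sum_right b_e_A b_f_A intro!: sum.neutral)
  then have ce: "c (e j) = 0" and cf: "c (f j) = 0" if "j < \<nu>" for j
    using arg_cong[OF z', of "b (f j)"] arg_cong[OF z', of "b (e j)"] that
    by (simp_all add: b_f_comb_e b_f_comb_f b_e_comb_f b_e_comb_e b_e_A b_f_A)
  then have "?a = 0"
    using z' by simp
  then have "\<forall>a\<in>A_basis. c a = 0"
    using A_basis(2) unfolding independent_explicit by blast
  then show "c v = 0"
    using v ce cf unfolding witt_basis_def by auto
qed

lemma dim_UNIV_eq: "dim (UNIV :: 'v set) = 2 * \<nu> + card A_basis"
  using basis_card_eq_dim[OF subset_UNIV span_witt_basis independent_witt_basis] card_witt_basis
  by simp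

lemma card_generator_index: "card generator_index = \<nu> * (2 * dim (UNIV :: 'v set) - 2 * \<nu> - 1)"
proof -
  have "pair_index = ({..<\<nu>} \<times> {..<\<nu>} \<times> UNIV) - (\<lambda>i. (i, i, True)) ` {..<\<nu>}"
    unfolding pair_index_def by auto
  then have pairs: "card pair_index = 2 * \<nu> * \<nu> - \<nu>"
    by (simp add: card_Diff_subset card_cartesian_product card_image inj_on_def image_subset_iff)
  have "card generator_index = card (Inl ` pair_index :: (_ + (nat \<times> 'v \<times> bool)) set)
      + card (Inr ` aniso_index :: ((nat \<times> nat \<times> bool) + _) set)"
    unfolding generator_index_def using finite_pair_index finite_generator_index
    by (intro card_Un_disjoint) (auto simp: generator_index_def)
  also have "\<dots> = (2 * \<nu> * \<nu> - \<nu>) + 2 * \<nu> * card A_basis"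
    using pairs by (simp add: card_image aniso_index_eq card_cartesian_product)
  finally show ?thesis
    unfolding dim_UNIV_eq by (cases \<nu>) (simp_all add: algebra_simps)
qed

lemma WH_eq_combinations:
  "WH scale b Fl \<nu> = {comb x | x. \<forall>s\<in>generator_index. x s \<in> fixed_field st}"
proof
  show "WH scale b Fl \<nu> \<subseteq> {comb x | x. \<forall>s\<in>generator_index. x s \<in> fixed_field st}"
  proof
    fix u assume "u \<in> WH scale b Fl \<nu>"
    then have "adapted u"
      by (simp add: WH_iff_adapted)
    then show "u \<in> {comb x | x. \<forall>s\<in>generator_index. x s \<in> fixed_field st}"
      using adapted_eq_comb_WH_coords st_WH_coords unfolding fixed_field_def by blast
  qed
  show "{comb x | x. \<forall>s\<in>generator_index. x s \<in> fixed_field st} \<subseteq> WH scale b Fl \<nu>"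
    using adapted_comb unfolding fixed_field_def by (auto simp: WH_iff_adapted)
qed

lemma K_subspace_WH: "K_subspace (fixed_field st) (\<lambda>k u x. scale k (u x)) (WH scale b Fl \<nu>)"
  unfolding K_subspace_def fixed_field_def
  using adapted_zero adapted_add adapted_scale
  by (auto simp: WH_iff_adapted zero_fun_def plus_fun_def)

lemma K_dim_eq_WH:
  "K_dim_eq (fixed_field st) (\<lambda>k u x. scale k (u x)) (WH scale b Fl \<nu>)
    (\<nu> * (2 * dim (UNIV :: 'v set) - 2 * \<nu> - 1))"
proof -
  interpret unique_coordinates "\<lambda>k u x. scale k (u x)" "fixed_field st" generator_index generator
  proof
    fix x x' assume "\<forall>s\<in>generator_index. x s \<in> fixed_field st"
      "\<forall>s\<in>generator_index. x' s \<in> fixed_field st"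
      "(\<Sum>s\<in>generator_index. (\<lambda>y. scale (x s) (generator s y)))
        = (\<Sum>s\<in>generator_index. (\<lambda>y. scale (x' s) (generator s y)))"
    then show "\<forall>s\<in>generator_index. x s = x' s"
      using comb_coords_unique unfolding comb_def fixed_field_def by auto
  qed (auto simp: fixed_field_def zero_fun_def finite_generator_index)
  have "WH scale b Fl \<nu> = combinations"
    unfolding combinations_def WH_eq_combinations comb_def ..
  then show ?thesis
    using K_dim_eq_combinations card_generator_index by simp
qed

end

section \<open>Singular flags give Witt frames\<close>

context hermitian_space
begin

lemma witt_frame_of_singular_flag:
  assumes "singular_flag scale b Fl (witt_index scale b)"
  obtains e f where "witt_frame scale Bas st \<theta> b (witt_index scale b) e f Fl"
proof -
  define \<nu> where "\<nu> = witt_index scale b"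
  have flag: "partially_complete_flag scale Fl \<nu>" and singular: "totally_singular scale b (Fl \<nu>)"
    using assms unfolding singular_flag_def \<nu>_def by auto
  obtain e where Fl_eq: "\<And>i. i \<le> \<nu> \<Longrightarrow> Fl i = span (e ` {..<i})"
    and indep: "independent (e ` {..<\<nu>})" and inj: "inj_on e {..<\<nu>}"
    using partially_complete_flag_basis[OF flag] by blast
  have b_e_e: "b (e i) (e j) = 0" if "i < \<nu>" "j < \<nu>" for i j
    using singular Fl_eq[of \<nu>] that unfolding totally_singular_def by (auto intro: span_base)
  obtain f where b_e_f: "\<And>i j. i < \<nu> \<Longrightarrow> j < \<nu> \<Longrightarrow> b (e i) (f j) = (if i = j then 1 else 0)"
    and b_f_f: "\<And>i j. i < \<nu> \<Longrightarrow> j < \<nu> \<Longrightarrow> b (f i) (f j) = 0"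
    using exists_hyperbolic_partners[OF indep inj b_e_e] by blast
  have "dim (e ` {..<\<nu>}) = witt_index scale b"
    using dim_eq_card_independent[OF indep] card_image[OF inj] unfolding \<nu>_def by simp
  then have "y \<in> span (e ` {..<\<nu>})" if "\<And>i. i < \<nu> \<Longrightarrow> b (e i) y = 0" "b y y = 0" for y
    using isotropic_in_span_of_maximal_singular[of "e ` {..<\<nu>}" y] b_e_e that by auto
  then have "witt_frame scale Bas st \<theta> b \<nu> e f Fl"
    using b_e_e b_e_f b_f_f Fl_eq by unfold_locales auto
  then show ?thesis
    using that unfolding \<nu>_def by blast
qed

end

theorem mainTheorem18:
  fixes st :: "'f::field \<Rightarrow> 'f"
    and scale :: "'f \<Rightarrow> 'v::ab_group_add \<Rightarrow> 'v"
    and b :: "'v \<Rightarrow> 'v \<Rightarrow> 'f"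
    and n :: nat
    and Fl :: "nat \<Rightarrow> 'v set"
  assumes inv: "nontrivial_involution st"
    and vs: "vector_space scale"
    and fin: "\<exists>B. finite B \<and> module.span scale B = UNIV"
    and dimV: "vector_space.dim scale (UNIV :: 'v set) = n"
    and herm: "hermitian_form st scale b"
    and nondeg: "non_degenerate b"
    and flag: "singular_flag scale b Fl (witt_index scale b)"
  shows "(\<forall>u\<in>WH scale b Fl (witt_index scale b). Vector_Spaces.linear scale scale u)
    \<and> K_subspace (fixed_field st) (\<lambda>k u x. scale k (u x)) (WH scale b Fl (witt_index scale b))
    \<and> K_dim_eq (fixed_field st) (\<lambda>k u x. scale k (u x)) (WH scale b Fl (witt_index scale b))
        (witt_index scale b * (2 * n - 2 * witt_index scale b - 1))"
proof -
  interpret V: vector_space scale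
    by (rule vs)
  obtain Bas where Bas: "V.independent Bas" "UNIV \<subseteq> V.span Bas" "card Bas = n"
    using V.basis_exists[of UNIV] dimV by blast
  have "finite Bas"
    using fin V.independent_span_bound[OF _ Bas(1)] by auto
  then interpret finite_dimensional_vector_space scale Bas
    using Bas by unfold_locales auto
  obtain \<theta> where "st \<theta> \<noteq> \<theta>"
    using inv unfolding nontrivial_involution_def by (auto simp: fun_eq_iff)
  then interpret hermitian_space scale Bas st \<theta> b
    using inv herm nondeg unfolding nontrivial_involution_def by unfold_locales auto
  obtain e f where "witt_frame scale Bas st \<theta> b (witt_index scale b) e f Fl"
    using witt_frame_of_singular_flag[OF flag] .
  then interpret witt_frame scale Bas st \<theta> b "witt_index scale b" e f Fl .
  show ?thesis
    using K_subspace_WH K_dim_eq_WH dimV unfolding WH_def herm_endos_def by auto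
qed

end
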